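(* Assume (A1)–(A3) and let $\bar u_{\bar e}\in S(\bar e)$. Then for every $u^*\in L^2(\Omega)$, $D^*\mathcal G(\bar e,\bar u_{\bar e})(u^* )=\widehat D^*\mathcal G(\bar e,\bar u_{\bar e})(u^* )=\{e^*\in E^*: e^*=(0,0,e^*_\alpha,e^*_\beta),\ u^*=u^*_1-u^*_2,\ u^*_1=e^*_\alpha+e^*_\beta,\ u^*_2\in N(\bar u_{\bar e};\mathcal Q),\ e^*_\alpha\ge0\text{ on }\Omega_1(\bar e,\bar u_{\bar e}),\ e^*_\alpha=0\text{ on }\Omega\setminus\Omega_1(\bar e,\bar u_{\bar e}),\ e^*_\beta\le0\text{ on }\Omega_3(\bar e,\bar u_{\bar e}),\ e^*_\beta=0\text{ on }\Omega\setminus\Omega_3(\bar e,\bar u_{\bar e})\}$.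
   Context: Let $\Omega\subset\mathbb R^N$, $N\in\{1,2,3\}$; $\alpha,\beta\in L^\infty(\Omega)$, $\alpha\le\beta$, $\alpha\not\equiv\beta$; $\zeta\in L^2(\Omega)$, $\zeta\ge0$. $Ay=-\sum_{i,j}\partial_{x_j}(a_{ij}\partial_{x_i}y)$. $L,f$ Carathéodory, $C^2$ in $y$, with (A1) $f(\cdot,0)\in L^{\bar p}$, $\bar p>N/2$, $\partial f/\partial y\ge0$, $|\partial f/\partial y|+|\partial^2f/\partial y^2|\le C_{f,M}$ for $|y|\le M$, $\partial^2f/\partial y^2(x,\cdot)$ uniformly continuous on $[-M,M]$ uniformly in $x$; (A2) $L(\cdot,0)\in L^1$, $|\partial L/\partial y|\le\psi_M\in L^{\bar p}$, $|\partial^2L/\partial y^2|\le C_{L,M}$ for $|y|\le M$, $\partial^2L/\partial y^2(x,\cdot)$ uniformly continuous likewise; (A3) $\Omega$ open bounded with Lipschitz boundary $\Gamma$, $\mathcal Q\subset L^2(\Omega)$ closed convex bounded with $\mathcal U_{ad}(e)\cap\operatorname{int}\mathcal Q\ne\emptyset$ for some $e$, $a_{ij}\in C(\bar\Omega)$ uniformly elliptic. $y_u$ solves $Ay+f(x,y)=u$, $y=0$ on $\Gamma$; $J(u)=\int_\Omega L(x,y_u)+\frac12\int_\Omega\zeta u^2$. $E=L^2(\Omega)^4$, $e=(e_y,e_J,e_\alpha,e_\beta)$; $\mathcal U_{ad}(e)=\{u\in L^2:\alpha+e_\alpha\le u\le\beta+e_\beta\text{ a.e.}\}$, $\mathcal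 G(e)=\mathcal U_{ad}(e)\cap\mathcal Q$; $\mathcal J(u,e)=J(u+e_y)+(e_J,y_{u+e_y})_{L^2}$; $\mu(e)=\inf_{u\in\mathcal G(e)}\mathcal J(u,e)$; $S(e)=\{u\in\mathcal G(e):\mathcal J(u,e)=\mu(e)\}$. $\Omega_1(e,u)=\{u=\alpha+e_\alpha\}$, $\Omega_3(e,u)=\{u=\beta+e_\beta\}$. $N(\cdot;\mathcal Q)$ is the convex normal cone. $\widehat D^*$ and $D^*$ are the regular (Fréchet) and Mordukhovich (limiting) coderivatives: $e^*\in\widehat D^*\mathcal G(\bar e,\bar u)(u^* )$ iff $(e^*,-u^* )\in\widehat N((\bar e,\bar u);\operatorname{gph}\mathcal G)$, and $e^*\in D^*\mathcal G(\bar e,\bar u)(u^* )$ iff $(e^*,-u^* )\in N((\bar e,\bar u);\operatorname{gph}\mathcal G)$, the limiting normal cone. *)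

theory Defs
  imports "HOL-Analysis.Analysis"
begin

section \<open>Function spaces on a domain \<Omega> (elements represented by functions, equality a.e.)\<close>

abbreviation M :: "'a::euclidean_space set \<Rightarrow> 'a measure" where
  "M \<Omega> \<equiv> lebesgue_on \<Omega>"

definition L2 :: "'a::euclidean_space set \<Rightarrow> ('a \<Rightarrow> real) set" where
  "L2 \<Omega> = {u. u \<in> borel_measurable (M \<Omega>) \<and> integrable (M \<Omega>) (\<lambda>x. (u x)\<^sup>2)}"

definition Lp :: "real \<Rightarrow> 'a::euclidean_space set \<Rightarrow> ('a \<Rightarrow> real) set" where
  "Lp p \<Omega> = {u. u \<in> borel_measurable (M \<Omega>) \<and> integrable (M \<Omega>) (\<lambda>x. \<bar>u x\<bar> powr p)}"

definition Linf :: "'a::euclidean_space set \<Rightarrow> ('a \<Rightarrow> real) set" where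
  "Linf \<Omega> = {u. u \<in> borel_measurable (M \<Omega>) \<and> (\<exists>C. AE x in M \<Omega>. \<bar>u x\<bar> \<le> C)}"

definition L2_inner :: "'a::euclidean_space set \<Rightarrow> ('a \<Rightarrow> real) \<Rightarrow> ('a \<Rightarrow> real) \<Rightarrow> real" where
  "L2_inner \<Omega> u v = integral\<^sup>L (M \<Omega>) (\<lambda>x. u x * v x)"

definition L2_norm :: "'a::euclidean_space set \<Rightarrow> ('a \<Rightarrow> real) \<Rightarrow> real" where
  "L2_norm \<Omega> u = sqrt (L2_inner \<Omega> u u)"

definition L2_interior :: "'a::euclidean_space set \<Rightarrow> ('a \<Rightarrow> real) set \<Rightarrow> ('a \<Rightarrow> real) set" where
  "L2_interior \<Omega> Q = {u \<in> L2 \<Omega>. \<exists>r>0. \<forall>v \<in> L2 \<Omega>. L2_norm \<Omega> (\<lambda>x. v x - u x) < r \<longrightarrow> v \<in> Q}"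

definition L2_closed :: "'a::euclidean_space set \<Rightarrow> ('a \<Rightarrow> real) set \<Rightarrow> bool" where
  "L2_closed \<Omega> Q \<longleftrightarrow> (\<forall>uk u. (\<forall>k. uk k \<in> Q) \<longrightarrow> u \<in> L2 \<Omega> \<longrightarrow>
      (\<lambda>k. L2_norm \<Omega> (\<lambda>x. uk k x - u x)) \<longlonglongrightarrow> 0 \<longrightarrow> u \<in> Q)"

definition L2_convex :: "('a \<Rightarrow> real) set \<Rightarrow> bool" where
  "L2_convex Q \<longleftrightarrow> (\<forall>u\<in>Q. \<forall>v\<in>Q. \<forall>t::real. 0 \<le> t \<and> t \<le> 1 \<longrightarrow> (\<lambda>x. (1 - t) * u x + t * v x) \<in> Q)"

definition L2_bounded :: "'a::euclidean_space set \<Rightarrow> ('a \<Rightarrow> real) set \<Rightarrow> bool" where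
  "L2_bounded \<Omega> Q \<longleftrightarrow> (\<exists>C. \<forall>u\<in>Q. L2_norm \<Omega> u \<le> C)"

definition conv_normal :: "'a::euclidean_space set \<Rightarrow> ('a \<Rightarrow> real) \<Rightarrow> ('a \<Rightarrow> real) set \<Rightarrow> ('a \<Rightarrow> real) set" where
  "conv_normal \<Omega> ub Q = (if ub \<in> Q then {v \<in> L2 \<Omega>. \<forall>u\<in>Q. L2_inner \<Omega> v (\<lambda>x. u x - ub x) \<le> 0} else {})"

definition lipschitz_boundary :: "'a::euclidean_space set \<Rightarrow> bool" where
  "lipschitz_boundary \<Omega> \<longleftrightarrow> (\<forall>x0 \<in> frontier \<Omega>. \<exists>r>0. \<exists>\<nu> h Lc.
     norm \<nu> = 1 \<and>
     (\<forall>y z. y \<bullet> \<nu> = 0 \<longrightarrow> z \<bullet> \<nu> = 0 \<longrightarrow> \<bar>h y - h z\<bar> \<le> Lc * norm (y - z)) \<and>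
     \<Omega> \<inter> ball x0 r = {y + t *\<^sub>R \<nu> | y t. y \<bullet> \<nu> = 0 \<and> t < h y} \<inter> ball x0 r)"

definition pd :: "'a::euclidean_space \<Rightarrow> ('a \<Rightarrow> real) \<Rightarrow> ('a \<Rightarrow> real)" where
  "pd i \<phi> = (\<lambda>x. frechet_derivative \<phi> (at x) i)"

primrec iter_pd :: "'a::euclidean_space list \<Rightarrow> ('a \<Rightarrow> real) \<Rightarrow> ('a \<Rightarrow> real)" where
  "iter_pd [] \<phi> = \<phi>"
| "iter_pd (i # is) \<phi> = pd i (iter_pd is \<phi>)"

definition smooth_fun :: "('a::euclidean_space \<Rightarrow> real) \<Rightarrow> bool" where
  "smooth_fun \<phi> \<longleftrightarrow> (\<forall>is. set is \<subseteq> Basis \<longrightarrow> (\<forall>x. iter_pd is \<phi> differentiable (at x)))"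

definition test_fun :: "'a::euclidean_space set \<Rightarrow> ('a \<Rightarrow> real) \<Rightarrow> bool" where
  "test_fun \<Omega> \<phi> \<longleftrightarrow> smooth_fun \<phi> \<and> compact (closure {x. \<phi> x \<noteq> 0}) \<and> closure {x. \<phi> x \<noteq> 0} \<subseteq> \<Omega>"

definition weak_grad :: "'a::euclidean_space set \<Rightarrow> ('a \<Rightarrow> real) \<Rightarrow> ('a \<Rightarrow> 'a \<Rightarrow> real) \<Rightarrow> bool" where
  "weak_grad \<Omega> y g \<longleftrightarrow> (\<forall>i\<in>Basis. \<forall>\<phi>. test_fun \<Omega> \<phi> \<longrightarrow>
      integral\<^sup>L (M \<Omega>) (\<lambda>x. y x * pd i \<phi> x) = - integral\<^sup>L (M \<Omega>) (\<lambda>x. g i x * \<phi> x))"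

definition H10 :: "'a::euclidean_space set \<Rightarrow> ('a \<Rightarrow> real) \<Rightarrow> ('a \<Rightarrow> 'a \<Rightarrow> real) \<Rightarrow> bool" where
  "H10 \<Omega> y g \<longleftrightarrow> y \<in> L2 \<Omega> \<and> (\<forall>i\<in>Basis. g i \<in> L2 \<Omega>) \<and> weak_grad \<Omega> y g \<and>
     (\<exists>\<phi>. (\<forall>k. test_fun \<Omega> (\<phi> k)) \<and>
        (\<lambda>k. L2_norm \<Omega> (\<lambda>x. \<phi> k x - y x)) \<longlonglongrightarrow> 0 \<and>
        (\<forall>i\<in>Basis. (\<lambda>k. L2_norm \<Omega> (\<lambda>x. pd i (\<phi> k) x - g i x)) \<longlonglongrightarrow> 0))"

text \<open>y solves  A y + f(x,y) = u in \<Omega>, y = 0 on \<Gamma>  (weak solution in H^1_0 \<inter> L^\<infinity>),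
  where A y = - \<Sum>_{i,j} \<partial>_{x_j}(a_ij \<partial>_{x_i} y).\<close>
definition is_state :: "'a::euclidean_space set \<Rightarrow> ('a \<Rightarrow> 'a \<Rightarrow> 'a \<Rightarrow> real) \<Rightarrow> ('a \<Rightarrow> real \<Rightarrow> real)
      \<Rightarrow> ('a \<Rightarrow> real) \<Rightarrow> ('a \<Rightarrow> real) \<Rightarrow> bool" where
  "is_state \<Omega> a f u y \<longleftrightarrow> y \<in> Linf \<Omega> \<and> (\<exists>g. H10 \<Omega> y g \<and>
     (\<forall>\<phi>. test_fun \<Omega> \<phi> \<longrightarrow>
        integral\<^sup>L (M \<Omega>) (\<lambda>x. (\<Sum>i\<in>Basis. \<Sum>j\<in>Basis. a i j x * g i x * pd j \<phi> x) + f x (y x) * \<phi> x)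
        = integral\<^sup>L (M \<Omega>) (\<lambda>x. u x * \<phi> x)))"

definition state :: "'a::euclidean_space set \<Rightarrow> ('a \<Rightarrow> 'a \<Rightarrow> 'a \<Rightarrow> real) \<Rightarrow> ('a \<Rightarrow> real \<Rightarrow> real)
      \<Rightarrow> ('a \<Rightarrow> real) \<Rightarrow> ('a \<Rightarrow> real)" where
  "state \<Omega> a f u = (SOME y. is_state \<Omega> a f u y)"

type_synonym 'a pert = "('a \<Rightarrow> real) \<times> ('a \<Rightarrow> real) \<times> ('a \<Rightarrow> real) \<times> ('a \<Rightarrow> real)"
  (* e = (e_y, e_J, e_alpha, e_beta) *)

definition Espace :: "'a::euclidean_space set \<Rightarrow> 'a pert set" where
  "Espace \<Omega> = {(ey, eJ, ea, eb). ey \<in> L2 \<Omega> \<and> eJ \<in> L2 \<Omega> \<and> ea \<in> L2 \<Omega> \<and> eb \<in> L2 \<Omega>}"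

definition Uad :: "'a::euclidean_space set \<Rightarrow> ('a \<Rightarrow> real) \<Rightarrow> ('a \<Rightarrow> real) \<Rightarrow> 'a pert \<Rightarrow> ('a \<Rightarrow> real) set" where
  "Uad \<Omega> \<alpha> \<beta> e = (case e of (ey, eJ, ea, eb) \<Rightarrow>
     {u \<in> L2 \<Omega>. AE x in M \<Omega>. \<alpha> x + ea x \<le> u x \<and> u x \<le> \<beta> x + eb x})"

definition Gmap :: "'a::euclidean_space set \<Rightarrow> ('a \<Rightarrow> real) \<Rightarrow> ('a \<Rightarrow> real) \<Rightarrow> ('a \<Rightarrow> real) set
     \<Rightarrow> 'a pert \<Rightarrow> ('a \<Rightarrow> real) set" where
  "Gmap \<Omega> \<alpha> \<beta> Q e = Uad \<Omega> \<alpha> \<beta> e \<inter> Q"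

definition Jfun :: "'a::euclidean_space set \<Rightarrow> ('a \<Rightarrow> 'a \<Rightarrow> 'a \<Rightarrow> real) \<Rightarrow> ('a \<Rightarrow> real \<Rightarrow> real)
   \<Rightarrow> ('a \<Rightarrow> real \<Rightarrow> real) \<Rightarrow> ('a \<Rightarrow> real) \<Rightarrow> ('a \<Rightarrow> real) \<Rightarrow> real" where
  "Jfun \<Omega> a f L \<zeta> u = integral\<^sup>L (M \<Omega>) (\<lambda>x. L x (state \<Omega> a f u x))
      + 1/2 * integral\<^sup>L (M \<Omega>) (\<lambda>x. \<zeta> x * (u x)\<^sup>2)"

definition Jpert :: "'a::euclidean_space set \<Rightarrow> ('a \<Rightarrow> 'a \<Rightarrow> 'a \<Rightarrow> real) \<Rightarrow> ('a \<Rightarrow> real \<Rightarrow> real)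
   \<Rightarrow> ('a \<Rightarrow> real \<Rightarrow> real) \<Rightarrow> ('a \<Rightarrow> real) \<Rightarrow> ('a \<Rightarrow> real) \<Rightarrow> 'a pert \<Rightarrow> real" where
  "Jpert \<Omega> a f L \<zeta> u e = (case e of (ey, eJ, ea, eb) \<Rightarrow>
      Jfun \<Omega> a f L \<zeta> (\<lambda>x. u x + ey x) + L2_inner \<Omega> eJ (state \<Omega> a f (\<lambda>x. u x + ey x)))"

definition mu :: "'a::euclidean_space set \<Rightarrow> ('a \<Rightarrow> 'a \<Rightarrow> 'a \<Rightarrow> real) \<Rightarrow> ('a \<Rightarrow> real \<Rightarrow> real)
   \<Rightarrow> ('a \<Rightarrow> real \<Rightarrow> real) \<Rightarrow> ('a \<Rightarrow> real) \<Rightarrow> ('a \<Rightarrow> real) \<Rightarrow> ('a \<Rightarrow> real) \<Rightarrow> ('a \<Rightarrow> real) set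
   \<Rightarrow> 'a pert \<Rightarrow> real" where
  "mu \<Omega> a f L \<zeta> \<alpha> \<beta> Q e = (INF u \<in> Gmap \<Omega> \<alpha> \<beta> Q e. Jpert \<Omega> a f L \<zeta> u e)"

definition Sol :: "'a::euclidean_space set \<Rightarrow> ('a \<Rightarrow> 'a \<Rightarrow> 'a \<Rightarrow> real) \<Rightarrow> ('a \<Rightarrow> real \<Rightarrow> real)
   \<Rightarrow> ('a \<Rightarrow> real \<Rightarrow> real) \<Rightarrow> ('a \<Rightarrow> real) \<Rightarrow> ('a \<Rightarrow> real) \<Rightarrow> ('a \<Rightarrow> real) \<Rightarrow> ('a \<Rightarrow> real) set
   \<Rightarrow> 'a pert \<Rightarrow> ('a \<Rightarrow> real) set" where
  "Sol \<Omega> a f L \<zeta> \<alpha> \<beta> Q e =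
     {u \<in> Gmap \<Omega> \<alpha> \<beta> Q e. Jpert \<Omega> a f L \<zeta> u e = mu \<Omega> a f L \<zeta> \<alpha> \<beta> Q e}"

definition Omega1 :: "'a::euclidean_space set \<Rightarrow> ('a \<Rightarrow> real) \<Rightarrow> 'a pert \<Rightarrow> ('a \<Rightarrow> real) \<Rightarrow> 'a set" where
  "Omega1 \<Omega> \<alpha> e u = (case e of (ey, eJ, ea, eb) \<Rightarrow> {x \<in> \<Omega>. u x = \<alpha> x + ea x})"

definition Omega3 :: "'a::euclidean_space set \<Rightarrow> ('a \<Rightarrow> real) \<Rightarrow> 'a pert \<Rightarrow> ('a \<Rightarrow> real) \<Rightarrow> 'a set" where
  "Omega3 \<Omega> \<beta> e u = (case e of (ey, eJ, ea, eb) \<Rightarrow> {x \<in> \<Omega>. u x = \<beta> x + eb x})"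

section \<open>Generalized differentiation in the Hilbert space E \<times> L2 (dual identified with the space)\<close>

type_synonym 'a gpt = "'a pert \<times> ('a \<Rightarrow> real)"

definition gsub :: "'a gpt \<Rightarrow> 'a gpt \<Rightarrow> 'a gpt" where
  "gsub p q = (case p of ((a1, b1, c1, d1), u1) \<Rightarrow> case q of ((a2, b2, c2, d2), u2) \<Rightarrow>
     (((\<lambda>x. a1 x - a2 x), (\<lambda>x. b1 x - b2 x), (\<lambda>x. c1 x - c2 x), (\<lambda>x. d1 x - d2 x)), (\<lambda>x. u1 x - u2 x)))"

definition ginner :: "'a::euclidean_space set \<Rightarrow> 'a gpt \<Rightarrow> 'a gpt \<Rightarrow> real" where
  "ginner \<Omega> p q = (case p of ((a1, b1, c1, d1), u1) \<Rightarrow> case q of ((a2, b2, c2, d2), u2) \<Rightarrow>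
     L2_inner \<Omega> a1 a2 + L2_inner \<Omega> b1 b2 + L2_inner \<Omega> c1 c2 + L2_inner \<Omega> d1 d2 + L2_inner \<Omega> u1 u2)"

definition gnorm :: "'a::euclidean_space set \<Rightarrow> 'a gpt \<Rightarrow> real" where
  "gnorm \<Omega> p = sqrt (ginner \<Omega> p p)"

definition gspace :: "'a::euclidean_space set \<Rightarrow> 'a gpt set" where
  "gspace \<Omega> = Espace \<Omega> \<times> L2 \<Omega>"

definition eps_normal :: "'a::euclidean_space set \<Rightarrow> real \<Rightarrow> 'a gpt set \<Rightarrow> 'a gpt \<Rightarrow> 'a gpt set" where
  "eps_normal \<Omega> \<epsilon> S p = (if p \<in> S then
     {ps \<in> gspace \<Omega>. \<forall>\<eta>>0. \<exists>\<delta>>0. \<forall>q\<in>S. gnorm \<Omega> (gsub q p) < \<delta> \<longrightarrow>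
        ginner \<Omega> ps (gsub q p) \<le> (\<epsilon> + \<eta>) * gnorm \<Omega> (gsub q p)} else {})"

definition frechet_normal :: "'a::euclidean_space set \<Rightarrow> 'a gpt set \<Rightarrow> 'a gpt \<Rightarrow> 'a gpt set" where
  "frechet_normal \<Omega> S p = eps_normal \<Omega> 0 S p"

definition limiting_normal :: "'a::euclidean_space set \<Rightarrow> 'a gpt set \<Rightarrow> 'a gpt \<Rightarrow> 'a gpt set" where
  "limiting_normal \<Omega> S p = (if p \<in> S then
     {ps \<in> gspace \<Omega>. \<exists>\<epsilon> pk psk. (\<forall>k. \<epsilon> k \<ge> 0 \<and> pk k \<in> S \<and> psk k \<in> eps_normal \<Omega> (\<epsilon> k) S (pk k)) \<and>
        \<epsilon> \<longlonglongrightarrow> 0 \<and> (\<lambda>k. gnorm \<Omega> (gsub (pk k) p)) \<longlonglongrightarrow> 0 \<and>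
        (\<forall>v\<in>gspace \<Omega>. (\<lambda>k. ginner \<Omega> (psk k) v) \<longlonglongrightarrow> ginner \<Omega> ps v)} else {})"

definition gph :: "'a::euclidean_space set \<Rightarrow> ('a pert \<Rightarrow> ('a \<Rightarrow> real) set) \<Rightarrow> 'a gpt set" where
  "gph \<Omega> G = {(e, u). e \<in> Espace \<Omega> \<and> u \<in> G e}"

definition regular_coderiv :: "'a::euclidean_space set \<Rightarrow> ('a pert \<Rightarrow> ('a \<Rightarrow> real) set)
    \<Rightarrow> 'a pert \<Rightarrow> ('a \<Rightarrow> real) \<Rightarrow> ('a \<Rightarrow> real) \<Rightarrow> 'a pert set" where
  "regular_coderiv \<Omega> G e u us = {es. (es, (\<lambda>x. - us x)) \<in> frechet_normal \<Omega> (gph \<Omega> G) (e, u)}"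

definition limiting_coderiv :: "'a::euclidean_space set \<Rightarrow> ('a pert \<Rightarrow> ('a \<Rightarrow> real) set)
    \<Rightarrow> 'a pert \<Rightarrow> ('a \<Rightarrow> real) \<Rightarrow> ('a \<Rightarrow> real) \<Rightarrow> 'a pert set" where
  "limiting_coderiv \<Omega> G e u us = {es. (es, (\<lambda>x. - us x)) \<in> limiting_normal \<Omega> (gph \<Omega> G) (e, u)}"

end

theory Submission
  imports Defs
begin

(* The graph of G is convex: the box constraints are linear in (e_alpha, e_beta, u) and Q is
   convex.  For a convex set an eps-normal satisfies the normal-cone inequality globally, up to
   eps times the distance; hence Frechet normals are exactly the normals of convex analysis, and
   a limiting normal is one as well as soon as the approximating eps_k-normals are bounded.
   Boundedness is checked component by component: the e_y and e_J parts have norm at most eps_k;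
   the e_alpha and e_beta parts are weakly convergent with a uniformly controlled negative part,
   which a gliding-hump argument turns into a norm bound (a uniform boundedness principle that
   needs no completeness of L^2); the sum of the e_alpha, e_beta and u parts is bounded thanks to
   the interior point of Q.  Finally the convex normal cone of the graph is computed by testing
   with graph points that move one component at a time, which yields the sign conditions on
   Omega_1 and Omega_3 and the splitting u* = u1* - u2*. *)

lemma L2_measurable: "f \<in> L2 \<Omega> \<Longrightarrow> f \<in> borel_measurable (M \<Omega>)"
  by (simp add: L2_def)

lemma L2_integrable_square: "f \<in> L2 \<Omega> \<Longrightarrow> integrable (M \<Omega>) (\<lambda>x. (f x)\<^sup>2)"
  by (simp add: L2_def)

lemma L2_dominated:
  assumes "g \<in> L2 \<Omega>" "f \<in> borel_measurable (M \<Omega>)" "AE x in M \<Omega>. \<bar>f x\<bar> \<le> \<bar>g x\<bar>"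
  shows "f \<in> L2 \<Omega>"
proof -
  have "integrable (M \<Omega>) (\<lambda>x. (f x)\<^sup>2)"
  proof (rule Bochner_Integration.integrable_bound[OF L2_integrable_square[OF assms(1)]])
    show "AE x in M \<Omega>. norm ((f x)\<^sup>2) \<le> norm ((g x)\<^sup>2)"
      using assms(3) by eventually_elim (simp add: abs_le_square_iff)
  qed (use assms(2) in measurable)
  with assms(2) show ?thesis by (simp add: L2_def)
qed

lemma L2_integrable_mult:
  assumes "f \<in> L2 \<Omega>" "g \<in> L2 \<Omega>"
  shows "integrable (M \<Omega>) (\<lambda>x. f x * g x)"
proof (rule Bochner_Integration.integrable_bound)
  show "integrable (M \<Omega>) (\<lambda>x. (f x)\<^sup>2 + (g x)\<^sup>2)"
    using assms by (simp add: L2_integrable_square)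
  have "\<bar>f x * g x\<bar> \<le> (f x)\<^sup>2 + (g x)\<^sup>2" for x
  proof -
    have "2 * \<bar>f x\<bar> * \<bar>g x\<bar> \<le> (f x)\<^sup>2 + (g x)\<^sup>2"
      using sum_squares_bound[of "\<bar>f x\<bar>" "\<bar>g x\<bar>"] by simp
    then show ?thesis
      unfolding abs_mult using mult_nonneg_nonneg[OF abs_ge_zero abs_ge_zero, of "f x" "g x"]
      by linarith
  qed
  then show "AE x in M \<Omega>. norm (f x * g x) \<le> norm ((f x)\<^sup>2 + (g x)\<^sup>2)"
    by simp
qed (use assms L2_measurable in measurable)

lemma L2_add:
  assumes "f \<in> L2 \<Omega>" "g \<in> L2 \<Omega>"
  shows "(\<lambda>x. f x + g x) \<in> L2 \<Omega>"
proof -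
  have "integrable (M \<Omega>) (\<lambda>x. (f x)\<^sup>2 + (g x)\<^sup>2 + 2 * (f x * g x))"
    using assms by (simp add: L2_integrable_square L2_integrable_mult)
  moreover have "(\<lambda>x. f x + g x) \<in> borel_measurable (M \<Omega>)"
    using assms by (intro borel_measurable_add L2_measurable)
  ultimately show ?thesis
    by (simp add: L2_def power2_sum algebra_simps)
qed

lemma L2_cmult: "f \<in> L2 \<Omega> \<Longrightarrow> (\<lambda>x. c * f x) \<in> L2 \<Omega>"
  by (auto simp: L2_def power_mult_distrib)

lemma L2_uminus: "f \<in> L2 \<Omega> \<Longrightarrow> (\<lambda>x. - f x) \<in> L2 \<Omega>"
  using L2_cmult[of f \<Omega> "-1"] by simp

lemma L2_diff: "f \<in> L2 \<Omega> \<Longrightarrow> g \<in> L2 \<Omega> \<Longrightarrow> (\<lambda>x. f x - g x) \<in> L2 \<Omega>"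
  using L2_add[of f \<Omega> "\<lambda>x. - g x"] L2_uminus[of g \<Omega>] by simp

lemma L2_zero [simp]: "(\<lambda>x. 0) \<in> L2 \<Omega>"
  by (simp add: L2_def)

lemma L2_max_0:
  assumes "f \<in> L2 \<Omega>"
  shows "(\<lambda>x. max 0 (f x)) \<in> L2 \<Omega>"
proof (rule L2_dominated[OF assms])
  show "(\<lambda>x. max 0 (f x)) \<in> borel_measurable (M \<Omega>)"
    using L2_measurable[OF assms] by measurable
qed auto

lemma L2_inner_commute: "L2_inner \<Omega> f g = L2_inner \<Omega> g f"
  by (simp add: L2_inner_def mult.commute)

lemma L2_inner_add_right:
  "f \<in> L2 \<Omega> \<Longrightarrow> g \<in> L2 \<Omega> \<Longrightarrow> h \<in> L2 \<Omega> \<Longrightarrow>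
    L2_inner \<Omega> f (\<lambda>x. g x + h x) = L2_inner \<Omega> f g + L2_inner \<Omega> f h"
  by (simp add: L2_inner_def distrib_left L2_integrable_mult)

lemma L2_inner_diff_right:
  "f \<in> L2 \<Omega> \<Longrightarrow> g \<in> L2 \<Omega> \<Longrightarrow> h \<in> L2 \<Omega> \<Longrightarrow>
    L2_inner \<Omega> f (\<lambda>x. g x - h x) = L2_inner \<Omega> f g - L2_inner \<Omega> f h"
  by (simp add: L2_inner_def right_diff_distrib L2_integrable_mult)

lemma L2_inner_add_left:
  "f \<in> L2 \<Omega> \<Longrightarrow> g \<in> L2 \<Omega> \<Longrightarrow> h \<in> L2 \<Omega> \<Longrightarrow>
    L2_inner \<Omega> (\<lambda>x. g x + h x) f = L2_inner \<Omega> g f + L2_inner \<Omega> h f"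
  by (simp add: L2_inner_def distrib_right L2_integrable_mult)

lemma L2_inner_diff_left:
  "f \<in> L2 \<Omega> \<Longrightarrow> g \<in> L2 \<Omega> \<Longrightarrow> h \<in> L2 \<Omega> \<Longrightarrow>
    L2_inner \<Omega> (\<lambda>x. g x - h x) f = L2_inner \<Omega> g f - L2_inner \<Omega> h f"
  by (simp add: L2_inner_def left_diff_distrib L2_integrable_mult)

lemma L2_inner_cmult_right [simp]: "L2_inner \<Omega> f (\<lambda>x. c * g x) = c * L2_inner \<Omega> f g"
  by (simp add: L2_inner_def algebra_simps)

lemma L2_inner_cmult_left [simp]: "L2_inner \<Omega> (\<lambda>x. c * f x) g = c * L2_inner \<Omega> f g"
  by (simp add: L2_inner_def algebra_simps)

lemma L2_inner_minus_right [simp]: "L2_inner \<Omega> f (\<lambda>x. - g x) = - L2_inner \<Omega> f g"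
  by (simp add: L2_inner_def)

lemma L2_inner_minus_left [simp]: "L2_inner \<Omega> (\<lambda>x. - f x) g = - L2_inner \<Omega> f g"
  by (simp add: L2_inner_def)

lemma L2_inner_zero_right [simp]: "L2_inner \<Omega> f (\<lambda>x. 0) = 0"
  by (simp add: L2_inner_def)

lemma L2_inner_zero_left [simp]: "L2_inner \<Omega> (\<lambda>x. 0) f = 0"
  by (simp add: L2_inner_def)

lemma L2_inner_self_nonneg: "0 \<le> L2_inner \<Omega> f f"
  unfolding L2_inner_def by (rule integral_nonneg_AE) simp

lemma L2_norm_nonneg: "0 \<le> L2_norm \<Omega> f"
  by (simp add: L2_norm_def L2_inner_self_nonneg)

lemma abs_L2_norm [simp]: "\<bar>L2_norm \<Omega> f\<bar> = L2_norm \<Omega> f"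
  by (simp add: L2_norm_nonneg)

lemma L2_norm_square: "(L2_norm \<Omega> f)\<^sup>2 = L2_inner \<Omega> f f"
  by (simp add: L2_norm_def L2_inner_self_nonneg)

lemma L2_norm_zero [simp]: "L2_norm \<Omega> (\<lambda>x. 0) = 0"
  by (simp add: L2_norm_def)

lemma L2_norm_minus [simp]: "L2_norm \<Omega> (\<lambda>x. - f x) = L2_norm \<Omega> f"
  by (simp add: L2_norm_def)

lemma L2_norm_cmult: "L2_norm \<Omega> (\<lambda>x. c * f x) = \<bar>c\<bar> * L2_norm \<Omega> f"
proof -
  have "L2_inner \<Omega> (\<lambda>x. c * f x) (\<lambda>x. c * f x) = c\<^sup>2 * L2_inner \<Omega> f f"
    by (simp add: power2_eq_square)
  then show ?thesis by (simp add: L2_norm_def real_sqrt_mult)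
qed

lemma L2_inner_self_eq_0:
  assumes "f \<in> L2 \<Omega>" "L2_inner \<Omega> f f = 0"
  shows "AE x in M \<Omega>. f x = 0"
  using assms integral_nonneg_eq_0_iff_AE[of "M \<Omega>" "\<lambda>x. f x * f x"]
  by (simp add: L2_inner_def L2_integrable_mult)

lemma L2_norm_le_0_imp_AE_zero:
  assumes "f \<in> L2 \<Omega>" "L2_norm \<Omega> f \<le> 0"
  shows "AE x in M \<Omega>. f x = 0"
proof (rule L2_inner_self_eq_0[OF assms(1)])
  show "L2_inner \<Omega> f f = 0"
    using assms(2) L2_norm_nonneg[of \<Omega> f] L2_norm_square[of \<Omega> f] by simp
qed

lemma L2_inner_cong_AE:
  assumes "f \<in> L2 \<Omega>" "f' \<in> L2 \<Omega>" "g \<in> L2 \<Omega>" "g' \<in> L2 \<Omega>"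
    and "AE x in M \<Omega>. f x = f' x" "AE x in M \<Omega>. g x = g' x"
  shows "L2_inner \<Omega> f g = L2_inner \<Omega> f' g'"
  unfolding L2_inner_def
  by (rule integral_cong_AE)
    (use assms in \<open>auto elim: AE_mp intro: borel_measurable_integrable L2_integrable_mult\<close>)

lemma AE_in_domain: "AE x in M \<Omega>. x \<in> \<Omega>"
  using AE_space[of "M \<Omega>"] by simp

lemma L2_inner_nonpos_AE:
  "AE x in M \<Omega>. f x * g x \<le> 0 \<Longrightarrow> L2_inner \<Omega> f g \<le> 0"
  unfolding L2_inner_def using integral_nonneg_AE[of "\<lambda>x. - (f x * g x)" "M \<Omega>"] by simp

lemma abs_mult_le_AM_GM:
  fixes a b t :: real
  assumes "t > 0"
  shows "\<bar>a * b\<bar> \<le> (t * a\<^sup>2 + b\<^sup>2 / t) / 2"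
proof -
  have "2 * (t * \<bar>a\<bar>) * \<bar>b\<bar> \<le> (t * \<bar>a\<bar>)\<^sup>2 + \<bar>b\<bar>\<^sup>2"
    by (rule sum_squares_bound)
  then have "2 * t * \<bar>a * b\<bar> \<le> t * (t * a\<^sup>2 + b\<^sup>2 / t)"
    using assms by (simp add: abs_mult power2_eq_square algebra_simps)
  then show ?thesis
    using assms by (simp add: mult_le_cancel_left_pos)
qed

lemma le_mult_if_AM_GM_bound:
  fixes x a b :: real
  assumes "0 \<le> a" "0 \<le> b" and AM_GM: "\<And>t. t > 0 \<Longrightarrow> x \<le> (t * a\<^sup>2 + b\<^sup>2 / t) / 2"
  shows "x \<le> a * b"
proof (cases "a > 0 \<and> b > 0")
  case True
  then show ?thesis
    using AM_GM[of "b / a"] by (simp add: power2_eq_square)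
next
  case False
  have "x \<le> e" if "e > 0" for e
  proof (cases "a = 0")
    case True
    define t where "t = (b\<^sup>2 + 1) / e"
    have "t > 0" using that by (simp add: t_def add_nonneg_pos)
    moreover have "b\<^sup>2 / t \<le> e"
    proof -
      have "b\<^sup>2 / t = e * (b\<^sup>2 / (b\<^sup>2 + 1))" by (simp add: t_def)
      also have "\<dots> \<le> e * 1"
        using that by (intro mult_left_mono) (simp_all add: divide_le_eq_1 add_nonneg_pos)
      finally show ?thesis by simp
    qed
    ultimately show ?thesis
      using AM_GM[of t] True that by simp
  next
    case False
    then have "b = 0" using \<open>\<not> (a > 0 \<and> b > 0)\<close> assms by auto
    define t where "t = e / (a\<^sup>2 + 1)"
    have "t > 0" using that by (simp add: t_def add_nonneg_pos)
    moreover have "t * a\<^sup>2 \<le> e"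
    proof -
      have "t * a\<^sup>2 = e * (a\<^sup>2 / (a\<^sup>2 + 1))" by (simp add: t_def)
      also have "\<dots> \<le> e * 1"
        using that by (intro mult_left_mono) (simp_all add: divide_le_eq_1 add_nonneg_pos)
      finally show ?thesis by simp
    qed
    ultimately show ?thesis
      using AM_GM[of t] \<open>b = 0\<close> that by simp
  qed
  then have "x \<le> 0"
    by (meson dense not_le)
  with False assms show ?thesis by auto
qed

lemma L2_inner_abs_le_AM_GM:
  assumes "f \<in> L2 \<Omega>" "g \<in> L2 \<Omega>" "t > 0"
  shows "\<bar>L2_inner \<Omega> f g\<bar> \<le> (t * (L2_norm \<Omega> f)\<^sup>2 + (L2_norm \<Omega> g)\<^sup>2 / t) / 2"
proof -
  have "\<bar>L2_inner \<Omega> f g\<bar> \<le> integral\<^sup>L (M \<Omega>) (\<lambda>x. \<bar>f x * g x\<bar>)"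
    unfolding L2_inner_def by (rule integral_abs_bound[unfolded real_norm_def])
  also have "\<dots> \<le> integral\<^sup>L (M \<Omega>) (\<lambda>x. (t * (f x)\<^sup>2 + (g x)\<^sup>2 / t) / 2)"
  proof (rule integral_mono)
    show "integrable (M \<Omega>) (\<lambda>x. \<bar>f x * g x\<bar>)"
      using assms by (simp add: L2_integrable_mult)
    show "integrable (M \<Omega>) (\<lambda>x. (t * (f x)\<^sup>2 + (g x)\<^sup>2 / t) / 2)"
      using assms by (simp add: L2_integrable_square)
  qed (rule abs_mult_le_AM_GM[OF assms(3)])
  also have "\<dots> = (t * integral\<^sup>L (M \<Omega>) (\<lambda>x. (f x)\<^sup>2) + integral\<^sup>L (M \<Omega>) (\<lambda>x. (g x)\<^sup>2) / t) / 2"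
    using assms by (simp add: L2_integrable_square)
  also have "\<dots> = (t * (L2_norm \<Omega> f)\<^sup>2 + (L2_norm \<Omega> g)\<^sup>2 / t) / 2"
    by (simp only: L2_norm_square) (simp add: L2_inner_def power2_eq_square)
  finally show ?thesis .
qed

lemma L2_Cauchy_Schwarz:
  assumes "f \<in> L2 \<Omega>" "g \<in> L2 \<Omega>"
  shows "\<bar>L2_inner \<Omega> f g\<bar> \<le> L2_norm \<Omega> f * L2_norm \<Omega> g"
  by (rule le_mult_if_AM_GM_bound[OF L2_norm_nonneg L2_norm_nonneg L2_inner_abs_le_AM_GM[OF assms]])

lemma L2_norm_triangle:
  assumes "f \<in> L2 \<Omega>" "g \<in> L2 \<Omega>"
  shows "L2_norm \<Omega> (\<lambda>x. f x + g x) \<le> L2_norm \<Omega> f + L2_norm \<Omega> g"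
proof -
  have "(L2_norm \<Omega> (\<lambda>x. f x + g x))\<^sup>2 = (L2_norm \<Omega> f)\<^sup>2 + 2 * L2_inner \<Omega> f g + (L2_norm \<Omega> g)\<^sup>2"
    unfolding L2_norm_square using assms L2_add[OF assms]
    by (simp add: L2_inner_add_left L2_inner_add_right L2_inner_commute[of \<Omega> g f])
  also have "\<dots> \<le> (L2_norm \<Omega> f + L2_norm \<Omega> g)\<^sup>2"
    using L2_Cauchy_Schwarz[OF assms] by (simp add: power2_sum)
  finally show ?thesis
    by (rule power2_le_imp_le) (simp add: L2_norm_nonneg)
qed

lemma L2_norm_diff_le:
  "f \<in> L2 \<Omega> \<Longrightarrow> g \<in> L2 \<Omega> \<Longrightarrow> L2_norm \<Omega> (\<lambda>x. f x - g x) \<le> L2_norm \<Omega> f + L2_norm \<Omega> g"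
  using L2_norm_triangle[of f \<Omega> "\<lambda>x. - g x"] by (simp add: L2_uminus)

lemma L2_norm_mono:
  assumes "g \<in> L2 \<Omega>" "f \<in> borel_measurable (M \<Omega>)" "AE x in M \<Omega>. \<bar>f x\<bar> \<le> \<bar>g x\<bar>"
  shows "L2_norm \<Omega> f \<le> L2_norm \<Omega> g"
proof -
  have "f \<in> L2 \<Omega>" using L2_dominated[OF assms] .
  then have "L2_inner \<Omega> f f \<le> L2_inner \<Omega> g g"
    unfolding L2_inner_def
  proof (intro integral_mono_AE)
    show "AE x in M \<Omega>. f x * f x \<le> g x * g x"
      using assms(3) by eventually_elim (simp add: abs_le_square_iff flip: power2_eq_square)
  qed (use assms(1) in \<open>simp_all add: L2_integrable_mult\<close>)
  then show ?thesis by (simp add: L2_norm_def)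
qed

lemma L2_norm_le_if_inner_le:
  assumes z: "z \<in> L2 \<Omega>" and c: "0 \<le> c" and le: "\<And>h. h \<in> L2 \<Omega> \<Longrightarrow> L2_inner \<Omega> z h \<le> c * L2_norm \<Omega> h"
  shows "L2_norm \<Omega> z \<le> c"
proof -
  have "(L2_norm \<Omega> z)\<^sup>2 \<le> c * L2_norm \<Omega> z"
    using le[OF z] by (simp add: L2_norm_square)
  then show ?thesis
    using c L2_norm_nonneg[of \<Omega> z] by (cases "L2_norm \<Omega> z = 0") (auto simp: power2_eq_square)
qed

lemma L2_norm_negative_part_le:
  assumes z: "z \<in> L2 \<Omega>"
    and lower: "\<And>\<phi>. \<phi> \<in> L2 \<Omega> \<Longrightarrow> AE x in M \<Omega>. \<phi> x \<ge> 0 \<Longrightarrow> - L2_inner \<Omega> z \<phi> \<le> E * L2_norm \<Omega> \<phi>"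
  shows "L2_norm \<Omega> (\<lambda>x. max 0 (- z x)) \<le> \<bar>E\<bar>"
proof -
  define n where "n = (\<lambda>x. max 0 (- z x))"
  have "n \<in> L2 \<Omega>" unfolding n_def by (intro L2_max_0 L2_uminus z)
  have "(\<lambda>x. z x * n x) = (\<lambda>x. - (n x * n x))"
    by (auto simp: n_def max_def)
  then have "L2_inner \<Omega> z n = - L2_inner \<Omega> n n"
    by (simp add: L2_inner_def)
  then have "(L2_norm \<Omega> n)\<^sup>2 \<le> E * L2_norm \<Omega> n"
    using lower[OF \<open>n \<in> L2 \<Omega>\<close>] by (simp add: L2_norm_square n_def)
  then have "L2_norm \<Omega> n \<le> \<bar>E\<bar>"
    using L2_norm_nonneg[of \<Omega> n] by (cases "L2_norm \<Omega> n = 0") (auto simp: power2_eq_square)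
  then show ?thesis by (simp only: n_def)
qed

lemma L2_nonneg_complementary:
  assumes A: "A \<in> L2 \<Omega>" and s: "s \<in> borel_measurable (M \<Omega>)" "AE x in M \<Omega>. 0 \<le> s x"
    and ge: "\<And>\<phi>. \<phi> \<in> L2 \<Omega> \<Longrightarrow> AE x in M \<Omega>. 0 \<le> \<phi> x \<Longrightarrow> 0 \<le> L2_inner \<Omega> A \<phi>"
    and le: "\<And>m. m \<in> L2 \<Omega> \<Longrightarrow> AE x in M \<Omega>. 0 \<le> m x \<and> m x \<le> s x \<Longrightarrow> L2_inner \<Omega> A m \<le> 0"
  shows "AE x in M \<Omega>. 0 \<le> A x \<and> (0 < s x \<longrightarrow> A x = 0)"
proof -
  have "L2_norm \<Omega> (\<lambda>x. max 0 (- A x)) \<le> \<bar>0\<bar>"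
    using ge by (intro L2_norm_negative_part_le[OF A]) force
  then have "AE x in M \<Omega>. max 0 (- A x) = 0"
    by (intro L2_norm_le_0_imp_AE_zero L2_max_0 L2_uminus A) simp
  then have A_nonneg: "AE x in M \<Omega>. 0 \<le> A x"
    by eventually_elim simp
  define m where "m = (\<lambda>x. min (s x) (max 0 (A x)))"
  have m: "AE x in M \<Omega>. 0 \<le> m x \<and> m x \<le> s x \<and> \<bar>m x\<bar> \<le> \<bar>A x\<bar>"
    using s(2) by eventually_elim (auto simp: m_def)
  have mL: "m \<in> L2 \<Omega>"
  proof (rule L2_dominated[OF A])
    show "m \<in> borel_measurable (M \<Omega>)" unfolding m_def using s(1) L2_measurable[OF A] by measurable
  qed (use m in \<open>auto elim: eventually_mono\<close>)
  have Am: "AE x in M \<Omega>. 0 \<le> A x * m x"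
    using A_nonneg m by eventually_elim simp
  have "L2_inner \<Omega> A m \<le> 0"
    using m by (intro le mL) (auto elim: eventually_mono)
  moreover have "0 \<le> L2_inner \<Omega> A m"
    unfolding L2_inner_def using Am by (rule integral_nonneg_AE)
  ultimately have "AE x in M \<Omega>. A x * m x = 0"
    using integral_nonneg_eq_0_iff_AE[OF L2_integrable_mult[OF A mL] Am] by (simp add: L2_inner_def)
  then show ?thesis
    using A_nonneg m by eventually_elim (auto simp: m_def min_def max_def split: if_splits)
qed

lemma L2_normal_interior_bound:
  assumes cL: "c \<in> L2 \<Omega>" and r: "r > 0"
    and ball: "\<And>v. v \<in> L2 \<Omega> \<Longrightarrow> L2_norm \<Omega> (\<lambda>x. v x - c x) < r \<Longrightarrow> v \<in> Q"
    and w: "w \<in> L2 \<Omega>" and u: "u \<in> L2 \<Omega>"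
    and normal: "\<And>q. q \<in> Q \<Longrightarrow> L2_inner \<Omega> w (\<lambda>x. q x - u x) \<le> \<delta>"
  shows "r / 2 * L2_norm \<Omega> w \<le> \<delta> + L2_inner \<Omega> w (\<lambda>x. u x - c x)"
proof -
  define t where "t = (if L2_norm \<Omega> w = 0 then 0 else r / (2 * L2_norm \<Omega> w))"
  define v where "v = (\<lambda>x. c x + t * w x)"
  have t: "t * L2_norm \<Omega> w = r / 2" if "L2_norm \<Omega> w \<noteq> 0" using that by (simp add: t_def)
  have "t \<ge> 0" using r L2_norm_nonneg[of \<Omega> w] by (simp add: t_def)
  have vL: "v \<in> L2 \<Omega>" unfolding v_def by (intro L2_add L2_cmult cL w)
  have "L2_norm \<Omega> (\<lambda>x. v x - c x) = t * L2_norm \<Omega> w"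
    using \<open>t \<ge> 0\<close> by (simp add: v_def L2_norm_cmult)
  also have "\<dots> < r" using t r by (cases "L2_norm \<Omega> w = 0") auto
  finally have "v \<in> Q" by (rule ball[OF vL])
  have "L2_inner \<Omega> w (\<lambda>x. v x - u x) = t * (L2_norm \<Omega> w)\<^sup>2 - L2_inner \<Omega> w (\<lambda>x. u x - c x)"
  proof -
    have "(\<lambda>x. v x - u x) = (\<lambda>x. t * w x - (u x - c x))" by (auto simp: v_def)
    then show ?thesis
      using w u cL by (simp add: L2_inner_diff_right L2_cmult L2_diff L2_norm_square)
  qed
  moreover have "t * (L2_norm \<Omega> w)\<^sup>2 = r / 2 * L2_norm \<Omega> w"
    using t by (cases "L2_norm \<Omega> w = 0") (simp_all add: power2_eq_square)
  ultimately show ?thesis using normal[OF \<open>v \<in> Q\<close>] by linarith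
qed

section \<open>Uniform boundedness of weakly convergent sequences with controlled negative parts\<close>

lemma convergent_bounded_above: "convergent (X :: nat \<Rightarrow> real) \<Longrightarrow> \<exists>K. \<forall>k. X k \<le> K"
  by (metis BseqE abs_le_D1 convergent_imp_Bseq real_norm_def)

lemma L2_sqrt_enn2real:
  assumes [measurable]: "V \<in> borel_measurable (M \<Omega>)" and finite: "(\<integral>\<^sup>+x. V x \<partial>M \<Omega>) < \<infinity>"
  shows "(\<lambda>x. sqrt (enn2real (V x))) \<in> L2 \<Omega>"
proof -
  have "integrable (M \<Omega>) (\<lambda>x. (sqrt (enn2real (V x)))\<^sup>2)"
  proof (rule integrableI_bounded)
    have "(\<integral>\<^sup>+x. ennreal (norm ((sqrt (enn2real (V x)))\<^sup>2)) \<partial>M \<Omega>) \<le> (\<integral>\<^sup>+x. V x \<partial>M \<Omega>)"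
      by (intro nn_integral_mono) (auto simp: ennreal_enn2real_if)
    then show "(\<integral>\<^sup>+x. ennreal (norm ((sqrt (enn2real (V x)))\<^sup>2)) \<partial>M \<Omega>) < \<infinity>"
      using finite by (rule le_less_trans)
  qed measurable
  then show ?thesis by (simp add: L2_def)
qed

lemma L2_dominating_function:
  assumes D: "\<And>j. D j \<in> L2 \<Omega>" and summable: "summable (\<lambda>j. (L2_norm \<Omega> (D j))\<^sup>2)"
  shows "\<exists>v \<in> L2 \<Omega>. AE x in M \<Omega>. \<forall>j. \<bar>D j x\<bar> \<le> v x"
proof -
  have [measurable]: "D j \<in> borel_measurable (M \<Omega>)" for j
    using D by (rule L2_measurable)
  define V where "V x = (\<Sum>j. ennreal ((D j x)\<^sup>2))" for x
  have V_meas [measurable]: "V \<in> borel_measurable (M \<Omega>)"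
    unfolding V_def by measurable
  have "(\<integral>\<^sup>+x. V x \<partial>M \<Omega>) = (\<Sum>j. \<integral>\<^sup>+x. ennreal ((D j x)\<^sup>2) \<partial>M \<Omega>)"
    unfolding V_def by (rule nn_integral_suminf) measurable
  also have "\<dots> = (\<Sum>j. ennreal ((L2_norm \<Omega> (D j))\<^sup>2))"
  proof (rule suminf_cong)
    fix j
    have "(\<integral>\<^sup>+x. ennreal ((D j x)\<^sup>2) \<partial>M \<Omega>) = ennreal (integral\<^sup>L (M \<Omega>) (\<lambda>x. (D j x)\<^sup>2))"
      using D by (intro nn_integral_eq_integral) (auto simp: L2_integrable_square)
    also have "integral\<^sup>L (M \<Omega>) (\<lambda>x. (D j x)\<^sup>2) = (L2_norm \<Omega> (D j))\<^sup>2"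
      by (simp only: L2_norm_square) (simp add: L2_inner_def power2_eq_square)
    finally show "(\<integral>\<^sup>+x. ennreal ((D j x)\<^sup>2) \<partial>M \<Omega>) = ennreal ((L2_norm \<Omega> (D j))\<^sup>2)" .
  qed
  also have "\<dots> = ennreal (\<Sum>j. (L2_norm \<Omega> (D j))\<^sup>2)"
    using summable by (simp add: suminf_ennreal2)
  finally have V_finite: "(\<integral>\<^sup>+x. V x \<partial>M \<Omega>) < \<infinity>"
    by simp
  have "AE x in M \<Omega>. V x \<noteq> \<infinity>"
    using V_finite by (intro nn_integral_PInf_AE) auto
  then have "AE x in M \<Omega>. \<forall>j. \<bar>D j x\<bar> \<le> sqrt (enn2real (V x))"
  proof (eventually_elim, intro allI)
    fix x j assume "V x \<noteq> \<infinity>"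
    have "(\<Sum>i\<in>{j}. ennreal ((D i x)\<^sup>2)) \<le> V x"
      unfolding V_def by (rule sum_le_suminf) auto
    then have "enn2real (ennreal ((D j x)\<^sup>2)) \<le> enn2real (V x)"
      using \<open>V x \<noteq> \<infinity>\<close> by (intro enn2real_mono) (simp_all add: less_top)
    then have "sqrt ((D j x)\<^sup>2) \<le> sqrt (enn2real (V x))"
      by (intro real_sqrt_le_mono) simp
    then show "\<bar>D j x\<bar> \<le> sqrt (enn2real (V x))"
      by simp
  qed
  then show ?thesis
    using L2_sqrt_enn2real[OF V_meas V_finite] by (rule bexI)
qed

lemma L2_inner_positive_part:
  "L2_inner \<Omega> z (\<lambda>x. max 0 (z x)) = (L2_norm \<Omega> (\<lambda>x. max 0 (z x)))\<^sup>2"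
proof -
  have "(\<lambda>x. z x * max 0 (z x)) = (\<lambda>x. max 0 (z x) * max 0 (z x))"
    by (auto simp: max_def)
  then show ?thesis by (simp add: L2_norm_square L2_inner_def)
qed

lemma L2_inner_ge_if_dominated:
  assumes z: "z \<in> L2 \<Omega>"
    and lower: "\<And>\<phi>. \<phi> \<in> L2 \<Omega> \<Longrightarrow> AE x in M \<Omega>. \<phi> x \<ge> 0 \<Longrightarrow> - L2_inner \<Omega> z \<phi> \<le> E * L2_norm \<Omega> \<phi>"
    and F: "F \<in> L2 \<Omega>" and v: "v \<in> L2 \<Omega>" and F_le_v: "AE x in M \<Omega>. 0 \<le> F x \<and> F x \<le> v x"
  shows "L2_inner \<Omega> z F - \<bar>E\<bar> * L2_norm \<Omega> v \<le> L2_inner \<Omega> z v"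
proof -
  have vF: "(\<lambda>x. v x - F x) \<in> L2 \<Omega>" using v F by (rule L2_diff)
  have "- L2_inner \<Omega> z (\<lambda>x. v x - F x) \<le> E * L2_norm \<Omega> (\<lambda>x. v x - F x)"
    using F_le_v by (intro lower vF) (auto elim: eventually_mono)
  also have "\<dots> \<le> \<bar>E\<bar> * L2_norm \<Omega> v"
  proof (rule mult_mono[OF abs_ge_self _ abs_ge_zero L2_norm_nonneg])
    show "L2_norm \<Omega> (\<lambda>x. v x - F x) \<le> L2_norm \<Omega> v"
      by (rule L2_norm_mono[OF v L2_measurable[OF vF]]) (use F_le_v in \<open>auto elim: eventually_mono\<close>)
  qed
  finally show ?thesis
    using L2_inner_add_right[OF z F vF] by simp
qed

lemma L2_positive_parts_bounded:
  assumes z: "\<And>k. z k \<in> L2 \<Omega>"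
    and upper: "\<And>v. v \<in> L2 \<Omega> \<Longrightarrow> AE x in M \<Omega>. v x \<ge> 0 \<Longrightarrow> \<exists>K. \<forall>k. L2_inner \<Omega> (z k) v \<le> K"
    and lower: "\<And>k \<phi>. \<phi> \<in> L2 \<Omega> \<Longrightarrow> AE x in M \<Omega>. \<phi> x \<ge> 0 \<Longrightarrow> - L2_inner \<Omega> (z k) \<phi> \<le> E * L2_norm \<Omega> \<phi>"
  shows "\<exists>K. \<forall>k. L2_norm \<Omega> (\<lambda>x. max 0 (z k x)) \<le> K"
proof (rule ccontr)
  define p where "p k = (\<lambda>x. max 0 (z k x))" for k
  assume "\<not> ?thesis"
  then have "\<forall>j::nat. \<exists>k. 4 ^ j < L2_norm \<Omega> (p k)"
    unfolding p_def by (meson not_le)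
  then obtain \<kappa> where \<kappa>: "\<And>j. 4 ^ j < L2_norm \<Omega> (p (\<kappa> j))"
    by metis
  have norm_pos: "0 < L2_norm \<Omega> (p (\<kappa> j))" for j
    using \<kappa>[of j] zero_less_power[of "4::real" j] by linarith
  \<comment> \<open>the humps \<open>F j\<close> have norm \<open>2\<^sup>-\<^sup>j\<close> but \<open>\<langle>z (\<kappa> j), F j\<rangle> > 2\<^sup>j\<close>, so their common
    dominating function \<open>v\<close> makes \<open>\<langle>z (\<kappa> j), v\<rangle>\<close> unbounded\<close>
  define F where "F j = (\<lambda>x. (1 / (2 ^ j * L2_norm \<Omega> (p (\<kappa> j)))) * p (\<kappa> j) x)" for j
  have FL: "F j \<in> L2 \<Omega>" for j unfolding F_def p_def by (intro L2_cmult L2_max_0 z)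
  have F_nonneg: "0 \<le> F j x" for j x
    using norm_pos[of j] by (simp add: F_def p_def)
  have "L2_norm \<Omega> (F j) = (1 / 2) ^ j" for j
    using norm_pos[of j] unfolding F_def L2_norm_cmult by (simp add: power_one_over)
  then have "summable (\<lambda>j. (L2_norm \<Omega> (F j))\<^sup>2)"
    by (simp add: power2_eq_square summable_geometric flip: power_mult_distrib)
  then obtain v where vL: "v \<in> L2 \<Omega>" and v: "AE x in M \<Omega>. \<forall>j. \<bar>F j x\<bar> \<le> v x"
    using L2_dominating_function[of F, OF FL] by blast
  then have F_le_v: "AE x in M \<Omega>. 0 \<le> F j x \<and> F j x \<le> v x" for j
    using F_nonneg by (auto elim: eventually_mono)
  have "AE x in M \<Omega>. v x \<ge> 0"
    using F_le_v[of 0] by (auto elim: eventually_mono)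
  then obtain K where K: "\<And>k. L2_inner \<Omega> (z k) v \<le> K"
    using upper[OF vL] by blast
  have hump: "2 ^ j < L2_inner \<Omega> (z (\<kappa> j)) (F j)" for j
  proof -
    have "2 ^ j < L2_norm \<Omega> (p (\<kappa> j)) / 2 ^ j"
      using \<kappa>[of j] by (simp add: pos_less_divide_eq flip: power_mult_distrib)
    also have "\<dots> = L2_inner \<Omega> (z (\<kappa> j)) (F j)"
      using norm_pos[of j] L2_inner_positive_part[of \<Omega> "z (\<kappa> j)"]
      unfolding F_def L2_inner_cmult_right p_def by (simp add: power2_eq_square)
    finally show ?thesis .
  qed
  have "2 ^ j - \<bar>E\<bar> * L2_norm \<Omega> v \<le> K" for j
    using hump[of j] K[of "\<kappa> j"]
      L2_inner_ge_if_dominated[OF z[of "\<kappa> j"] lower[where k = "\<kappa> j"] FL[of j] vL F_le_v[of j]]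
    by linarith
  moreover obtain j where "K + \<bar>E\<bar> * L2_norm \<Omega> v < 2 ^ j"
    using real_arch_pow[of 2 "K + \<bar>E\<bar> * L2_norm \<Omega> v"] by auto
  ultimately show False by (smt (verit))
qed

lemma L2_norm_uniformly_bounded:
  assumes z: "\<And>k. z k \<in> L2 \<Omega>"
    and upper: "\<And>v. v \<in> L2 \<Omega> \<Longrightarrow> AE x in M \<Omega>. v x \<ge> 0 \<Longrightarrow> \<exists>K. \<forall>k. L2_inner \<Omega> (z k) v \<le> K"
    and lower: "\<And>k \<phi>. \<phi> \<in> L2 \<Omega> \<Longrightarrow> AE x in M \<Omega>. \<phi> x \<ge> 0 \<Longrightarrow> - L2_inner \<Omega> (z k) \<phi> \<le> E * L2_norm \<Omega> \<phi>"
  shows "\<exists>K. \<forall>k. L2_norm \<Omega> (z k) \<le> K"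
proof -
  obtain K where K: "\<And>k. L2_norm \<Omega> (\<lambda>x. max 0 (z k x)) \<le> K"
    using L2_positive_parts_bounded[OF z upper lower] by blast
  have "L2_norm \<Omega> (z k) \<le> K + \<bar>E\<bar>" for k
  proof -
    have "z k = (\<lambda>x. max 0 (z k x) - max 0 (- z k x))"
      by (auto simp: max_def)
    then have "L2_norm \<Omega> (z k) \<le> L2_norm \<Omega> (\<lambda>x. max 0 (z k x)) + L2_norm \<Omega> (\<lambda>x. max 0 (- z k x))"
      by (metis L2_norm_diff_le L2_max_0 L2_uminus z)
    then show ?thesis
      using K[of k] L2_norm_negative_part_le[OF z[of k] lower[where k = k]] by linarith
  qed
  then show ?thesis by blast
qed

lemma gpt_cases: obtains a1 a2 a3 a4 u where "p = ((a1, a2, a3, a4), u)"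
  by (metis prod.collapse)

lemma gpt_seq_cases:
  obtains a1 a2 a3 a4 a5 where "\<And>k. s k = ((a1 k, a2 k, a3 k, a4 k), a5 k)"
  using that[of "\<lambda>k. fst (fst (s k))" "\<lambda>k. fst (snd (fst (s k)))" "\<lambda>k. fst (snd (snd (fst (s k))))"
      "\<lambda>k. snd (snd (snd (fst (s k))))" "\<lambda>k. snd (s k)"]
  by simp

lemma gsub_simp [simp]:
  "gsub ((a1, a2, a3, a4), u) ((b1, b2, b3, b4), v) =
    ((\<lambda>x. a1 x - b1 x, \<lambda>x. a2 x - b2 x, \<lambda>x. a3 x - b3 x, \<lambda>x. a4 x - b4 x), \<lambda>x. u x - v x)"
  by (simp add: gsub_def)

lemma ginner_simp [simp]:
  "ginner \<Omega> ((a1, a2, a3, a4), u) ((b1, b2, b3, b4), v) =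
    L2_inner \<Omega> a1 b1 + L2_inner \<Omega> a2 b2 + L2_inner \<Omega> a3 b3 + L2_inner \<Omega> a4 b4 + L2_inner \<Omega> u v"
  by (simp add: ginner_def)

lemma gspace_simp [simp]:
  "((a1, a2, a3, a4), u) \<in> gspace \<Omega> \<longleftrightarrow>
    a1 \<in> L2 \<Omega> \<and> a2 \<in> L2 \<Omega> \<and> a3 \<in> L2 \<Omega> \<and> a4 \<in> L2 \<Omega> \<and> u \<in> L2 \<Omega>"
  by (simp add: gspace_def Espace_def)

lemma gnorm_simp:
  "gnorm \<Omega> ((a1, a2, a3, a4), u) = sqrt ((L2_norm \<Omega> a1)\<^sup>2 + (L2_norm \<Omega> a2)\<^sup>2 + (L2_norm \<Omega> a3)\<^sup>2
      + (L2_norm \<Omega> a4)\<^sup>2 + (L2_norm \<Omega> u)\<^sup>2)"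
  by (simp add: gnorm_def L2_norm_square)

lemma gnorm_nonneg: "0 \<le> gnorm \<Omega> p"
  by (cases p rule: gpt_cases) (simp add: gnorm_simp)

lemma gnorm_square: "(gnorm \<Omega> p)\<^sup>2 = ginner \<Omega> p p"
  by (cases p rule: gpt_cases)
    (simp add: gnorm_simp add_nonneg_nonneg L2_norm_square L2_inner_self_nonneg)

lemma L2_norm_le_gnorm: "L2_norm \<Omega> u \<le> gnorm \<Omega> ((a1, a2, a3, a4), u)"
  unfolding gnorm_simp by (rule real_le_rsqrt) simp

lemma gnorm_le_sum:
  "gnorm \<Omega> ((a1, a2, a3, a4), u)
    \<le> L2_norm \<Omega> a1 + L2_norm \<Omega> a2 + L2_norm \<Omega> a3 + L2_norm \<Omega> a4 + L2_norm \<Omega> u"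
proof -
  have "0 \<le> L2_norm \<Omega> a1" "0 \<le> L2_norm \<Omega> a2" "0 \<le> L2_norm \<Omega> a3" "0 \<le> L2_norm \<Omega> a4" "0 \<le> L2_norm \<Omega> u"
    by (simp_all add: L2_norm_nonneg)
  then show ?thesis
    unfolding gnorm_simp by (intro real_le_lsqrt) (simp_all add: power2_eq_square algebra_simps)
qed

lemma gsub_gspace: "p \<in> gspace \<Omega> \<Longrightarrow> q \<in> gspace \<Omega> \<Longrightarrow> gsub p q \<in> gspace \<Omega>"
  by (cases p rule: gpt_cases, cases q rule: gpt_cases) (simp add: L2_diff)

lemma gsub_gsub_cancel: "gsub (gsub q p) (gsub r p) = gsub q r"
  by (cases p rule: gpt_cases, cases q rule: gpt_cases, cases r rule: gpt_cases) simp

lemma ginner_commute: "ginner \<Omega> p q = ginner \<Omega> q p"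
  by (cases p rule: gpt_cases, cases q rule: gpt_cases) (simp add: L2_inner_commute)

lemma ginner_gsub_right:
  "p \<in> gspace \<Omega> \<Longrightarrow> q \<in> gspace \<Omega> \<Longrightarrow> r \<in> gspace \<Omega> \<Longrightarrow>
    ginner \<Omega> p (gsub q r) = ginner \<Omega> p q - ginner \<Omega> p r"
  by (cases p rule: gpt_cases, cases q rule: gpt_cases, cases r rule: gpt_cases)
    (simp add: L2_inner_diff_right)

lemma ginner_abs_le_AM_GM:
  assumes "p \<in> gspace \<Omega>" "q \<in> gspace \<Omega>" "t > 0"
  shows "\<bar>ginner \<Omega> p q\<bar> \<le> (t * (gnorm \<Omega> p)\<^sup>2 + (gnorm \<Omega> q)\<^sup>2 / t) / 2"
proof -
  obtain a1 a2 a3 a4 a5 where p: "p = ((a1, a2, a3, a4), a5)" by (rule gpt_cases)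
  obtain b1 b2 b3 b4 b5 where q: "q = ((b1, b2, b3, b4), b5)" by (rule gpt_cases)
  let ?B = "\<lambda>a b. (t * (L2_norm \<Omega> a)\<^sup>2 + (L2_norm \<Omega> b)\<^sup>2 / t) / 2"
  have "\<bar>ginner \<Omega> p q\<bar> \<le> \<bar>L2_inner \<Omega> a1 b1\<bar> + \<bar>L2_inner \<Omega> a2 b2\<bar> + \<bar>L2_inner \<Omega> a3 b3\<bar>
      + \<bar>L2_inner \<Omega> a4 b4\<bar> + \<bar>L2_inner \<Omega> a5 b5\<bar>"
    unfolding p q ginner_simp by (smt (z3))
  also have "\<dots> \<le> ?B a1 b1 + ?B a2 b2 + ?B a3 b3 + ?B a4 b4 + ?B a5 b5"
    using assms by (intro add_mono L2_inner_abs_le_AM_GM) (simp_all add: p q)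
  also have "\<dots> = (t * (gnorm \<Omega> p)\<^sup>2 + (gnorm \<Omega> q)\<^sup>2 / t) / 2"
    unfolding p q gnorm_square ginner_simp L2_norm_square
    by (simp add: distrib_left add_divide_distrib)
  finally show ?thesis .
qed

lemma ginner_Cauchy_Schwarz:
  assumes "p \<in> gspace \<Omega>" "q \<in> gspace \<Omega>"
  shows "\<bar>ginner \<Omega> p q\<bar> \<le> gnorm \<Omega> p * gnorm \<Omega> q"
  by (rule le_mult_if_AM_GM_bound[OF gnorm_nonneg gnorm_nonneg ginner_abs_le_AM_GM[OF assms]])

lemma gnorm_gsub_le:
  assumes "p \<in> gspace \<Omega>" "q \<in> gspace \<Omega>"
  shows "gnorm \<Omega> (gsub p q) \<le> gnorm \<Omega> p + gnorm \<Omega> q"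
proof -
  have pq: "gsub p q \<in> gspace \<Omega>" using gsub_gspace[OF assms] .
  have "(gnorm \<Omega> (gsub p q))\<^sup>2 = ginner \<Omega> (gsub p q) p - ginner \<Omega> (gsub p q) q"
    unfolding gnorm_square using ginner_gsub_right[OF pq assms] .
  also have "\<dots> = ginner \<Omega> p (gsub p q) - ginner \<Omega> q (gsub p q)"
    by (simp only: ginner_commute[of \<Omega> "gsub p q"])
  also have "\<dots> = (gnorm \<Omega> p)\<^sup>2 - 2 * ginner \<Omega> p q + (gnorm \<Omega> q)\<^sup>2"
    using assms by (simp add: ginner_gsub_right gnorm_square ginner_commute[of \<Omega> q p])
  also have "\<dots> \<le> (gnorm \<Omega> p + gnorm \<Omega> q)\<^sup>2"
    using ginner_Cauchy_Schwarz[OF assms] by (simp add: power2_sum)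
  finally show ?thesis
    by (rule power2_le_imp_le) (simp add: gnorm_nonneg add_nonneg_nonneg)
qed

section \<open>Normals to convex sets\<close>

definition gcomb :: "real \<Rightarrow> 'a gpt \<Rightarrow> 'a gpt \<Rightarrow> 'a gpt" where
  "gcomb t p q = (case p of ((a1, a2, a3, a4), a5) \<Rightarrow> case q of ((b1, b2, b3, b4), b5) \<Rightarrow>
     ((\<lambda>x. a1 x + t * (b1 x - a1 x), \<lambda>x. a2 x + t * (b2 x - a2 x), \<lambda>x. a3 x + t * (b3 x - a3 x),
       \<lambda>x. a4 x + t * (b4 x - a4 x)), \<lambda>x. a5 x + t * (b5 x - a5 x)))"

definition gconvex :: "'a gpt set \<Rightarrow> bool" where
  "gconvex S \<longleftrightarrow> (\<forall>p\<in>S. \<forall>q\<in>S. \<forall>t. 0 \<le> t \<and> t \<le> 1 \<longrightarrow> gcomb t p q \<in> S)"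

definition gconv_normal :: "'a::euclidean_space set \<Rightarrow> 'a gpt set \<Rightarrow> 'a gpt \<Rightarrow> 'a gpt set" where
  "gconv_normal \<Omega> S p = (if p \<in> S then {ps \<in> gspace \<Omega>. \<forall>q\<in>S. ginner \<Omega> ps (gsub q p) \<le> 0} else {})"

lemma gcomb_simp [simp]:
  "gcomb t ((a1, a2, a3, a4), a5) ((b1, b2, b3, b4), b5) =
    ((\<lambda>x. a1 x + t * (b1 x - a1 x), \<lambda>x. a2 x + t * (b2 x - a2 x), \<lambda>x. a3 x + t * (b3 x - a3 x),
      \<lambda>x. a4 x + t * (b4 x - a4 x)), \<lambda>x. a5 x + t * (b5 x - a5 x))"
  by (simp add: gcomb_def)

lemma ginner_gsub_gcomb: "ginner \<Omega> s (gsub (gcomb t p q) p) = t * ginner \<Omega> s (gsub q p)"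
  by (cases s rule: gpt_cases, cases p rule: gpt_cases, cases q rule: gpt_cases)
    (simp add: distrib_left)

lemma gnorm_gsub_gcomb: "gnorm \<Omega> (gsub (gcomb t p q) p) = \<bar>t\<bar> * gnorm \<Omega> (gsub q p)"
proof -
  have "ginner \<Omega> (gsub (gcomb t p q) p) (gsub (gcomb t p q) p)
      = t\<^sup>2 * ginner \<Omega> (gsub q p) (gsub q p)"
    by (cases p rule: gpt_cases, cases q rule: gpt_cases) (simp add: power2_eq_square distrib_left)
  then show ?thesis
    by (simp add: gnorm_def real_sqrt_mult)
qed

lemma eps_normal_convex_le:
  assumes S: "gconvex S" and ps: "ps \<in> eps_normal \<Omega> \<epsilon> S p" and q: "q \<in> S"
  shows "ginner \<Omega> ps (gsub q p) \<le> \<epsilon> * gnorm \<Omega> (gsub q p)"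
proof -
  define N where "N = gnorm \<Omega> (gsub q p)"
  have N: "0 \<le> N" unfolding N_def by (rule gnorm_nonneg)
  have p: "p \<in> S" using ps by (simp add: eps_normal_def split: if_splits)
  have "ginner \<Omega> ps (gsub q p) \<le> (\<epsilon> + \<eta>) * N" if "\<eta> > 0" for \<eta>
  proof -
    obtain \<delta> where "\<delta> > 0" and \<delta>: "\<And>q'. q' \<in> S \<Longrightarrow> gnorm \<Omega> (gsub q' p) < \<delta> \<Longrightarrow>
        ginner \<Omega> ps (gsub q' p) \<le> (\<epsilon> + \<eta>) * gnorm \<Omega> (gsub q' p)"
      using ps \<open>\<eta> > 0\<close> p by (auto simp: eps_normal_def)
    define t where "t = min 1 (\<delta> / (N + 1))"
    have t: "0 < t" "t \<le> 1" using \<open>\<delta> > 0\<close> N by (auto simp: t_def)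
    have "t * N \<le> \<delta> / (N + 1) * N" using N by (intro mult_right_mono) (auto simp: t_def)
    also have "\<dots> < \<delta>" using \<open>\<delta> > 0\<close> N by (simp add: field_simps)
    finally have "gnorm \<Omega> (gsub (gcomb t p q) p) < \<delta>"
      using t by (simp add: gnorm_gsub_gcomb N_def)
    moreover have "gcomb t p q \<in> S" using S p q t by (simp add: gconvex_def)
    ultimately have "ginner \<Omega> ps (gsub (gcomb t p q) p) \<le> (\<epsilon> + \<eta>) * gnorm \<Omega> (gsub (gcomb t p q) p)"
      by (intro \<delta>)
    then have "t * ginner \<Omega> ps (gsub q p) \<le> t * ((\<epsilon> + \<eta>) * N)"
      using t by (simp add: ginner_gsub_gcomb gnorm_gsub_gcomb N_def mult.left_commute)
    then show ?thesis using t by simp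
  qed
  then have "ginner \<Omega> ps (gsub q p) \<le> \<epsilon> * N + e" if "e > 0" for e
  proof -
    have "ginner \<Omega> ps (gsub q p) \<le> (\<epsilon> + e / (N + 1)) * N"
      using \<open>e > 0\<close> N by (intro \<open>\<And>\<eta>. \<eta> > 0 \<Longrightarrow> _\<close>) simp
    also have "\<dots> \<le> \<epsilon> * N + e"
      using \<open>e > 0\<close> N by (simp add: field_simps)
    finally show ?thesis .
  qed
  then show ?thesis
    unfolding N_def by (rule field_le_epsilon)
qed

lemma gconv_normal_subset_frechet_normal: "gconv_normal \<Omega> S p \<subseteq> frechet_normal \<Omega> S p"
proof
  fix ps assume ps: "ps \<in> gconv_normal \<Omega> S p"
  then have "p \<in> S" by (simp add: gconv_normal_def split: if_splits)
  have "ginner \<Omega> ps (gsub q p) \<le> \<eta> * gnorm \<Omega> (gsub q p)" if "q \<in> S" "\<eta> > 0" for q \<eta>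
    using ps \<open>p \<in> S\<close> that gnorm_nonneg[of \<Omega> "gsub q p"]
    by (simp add: gconv_normal_def)
      (meson mult_nonneg_nonneg order.strict_implies_order order_trans)
  then show "ps \<in> frechet_normal \<Omega> S p"
    using ps \<open>p \<in> S\<close>
    by (auto simp: frechet_normal_def eps_normal_def gconv_normal_def intro: exI[of _ 1])
qed

lemma frechet_normal_subset_limiting_normal: "frechet_normal \<Omega> S p \<subseteq> limiting_normal \<Omega> S p"
proof
  fix ps assume ps: "ps \<in> frechet_normal \<Omega> S p"
  then have "p \<in> S" "ps \<in> gspace \<Omega>"
    by (simp_all add: frechet_normal_def eps_normal_def split: if_splits)
  have "gnorm \<Omega> (gsub p p) = 0"
    by (cases p rule: gpt_cases) (simp add: gnorm_simp)
  then have "\<exists>\<epsilon> pk psk. (\<forall>k. \<epsilon> k \<ge> 0 \<and> pk k \<in> S \<and> psk k \<in> eps_normal \<Omega> (\<epsilon> k) S (pk k)) \<and>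
      \<epsilon> \<longlonglongrightarrow> 0 \<and> (\<lambda>k. gnorm \<Omega> (gsub (pk k) p)) \<longlonglongrightarrow> 0 \<and>
      (\<forall>v\<in>gspace \<Omega>. (\<lambda>k. ginner \<Omega> (psk k) v) \<longlonglongrightarrow> ginner \<Omega> ps v)"
    using ps \<open>p \<in> S\<close> unfolding frechet_normal_def
    by (intro exI[of _ "\<lambda>k. 0"] exI[of _ "\<lambda>k. p"] exI[of _ "\<lambda>k. ps"]) simp
  then show "ps \<in> limiting_normal \<Omega> S p"
    using \<open>p \<in> S\<close> \<open>ps \<in> gspace \<Omega>\<close> by (simp add: limiting_normal_def)
qed

lemma limiting_normal_convex:
  assumes S: "gconvex S" "S \<subseteq> gspace \<Omega>" and p: "p \<in> S" and ps: "ps \<in> gspace \<Omega>"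
    and approx: "\<And>k. \<epsilon> k \<ge> 0 \<and> pk k \<in> S \<and> psk k \<in> eps_normal \<Omega> (\<epsilon> k) S (pk k)"
    and \<epsilon>: "\<epsilon> \<longlonglongrightarrow> 0" and pk: "(\<lambda>k. gnorm \<Omega> (gsub (pk k) p)) \<longlonglongrightarrow> 0"
    and weak: "\<And>v. v \<in> gspace \<Omega> \<Longrightarrow> (\<lambda>k. ginner \<Omega> (psk k) v) \<longlonglongrightarrow> ginner \<Omega> ps v"
    and bounded: "eventually (\<lambda>k. gnorm \<Omega> (psk k) \<le> K) sequentially"
  shows "ps \<in> gconv_normal \<Omega> S p"
proof -
  have "ginner \<Omega> ps (gsub q p) \<le> 0" if q: "q \<in> S" for q
  proof -
    define d where "d k = gnorm \<Omega> (gsub (pk k) p)" for k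
    have "eventually (\<lambda>k. ginner \<Omega> (psk k) (gsub q p)
        \<le> \<epsilon> k * (gnorm \<Omega> (gsub q p) + d k) + K * d k) sequentially"
      using bounded
    proof eventually_elim
      case (elim k)
      have pkS: "pk k \<in> gspace \<Omega>" and pskS: "psk k \<in> gspace \<Omega>"
        using approx[of k] S(2) by (auto simp: eps_normal_def split: if_splits)
      have qS: "q \<in> gspace \<Omega>" and pS: "p \<in> gspace \<Omega>" using q p S(2) by auto
      have "ginner \<Omega> (psk k) (gsub q p)
          = ginner \<Omega> (psk k) (gsub q (pk k)) + ginner \<Omega> (psk k) (gsub (pk k) p)"
        using pkS pskS qS pS by (simp add: ginner_gsub_right)
      also have "ginner \<Omega> (psk k) (gsub q (pk k)) \<le> \<epsilon> k * gnorm \<Omega> (gsub q (pk k))"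
        using approx[of k] by (intro eps_normal_convex_le[OF S(1) _ q]) auto
      also have "gnorm \<Omega> (gsub q (pk k)) \<le> gnorm \<Omega> (gsub q p) + d k"
        unfolding d_def using gnorm_gsub_le[OF gsub_gspace[OF qS pS] gsub_gspace[OF pkS pS]]
        by (simp add: gsub_gsub_cancel)
      \<comment> \<open>weak convergence alone does not control this term; the bound \<open>K\<close> does\<close>
      also have "ginner \<Omega> (psk k) (gsub (pk k) p) \<le> gnorm \<Omega> (psk k) * d k"
        unfolding d_def using ginner_Cauchy_Schwarz[OF pskS gsub_gspace[OF pkS pS]] by linarith
      also have "\<dots> \<le> K * d k"
        unfolding d_def using elim by (intro mult_right_mono gnorm_nonneg)
      finally show ?case
        using approx[of k] by (simp add: mult_left_mono)
    qed
    moreover have "(\<lambda>k. \<epsilon> k * (gnorm \<Omega> (gsub q p) + d k) + K * d k)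
        \<longlonglongrightarrow> 0 * (gnorm \<Omega> (gsub q p) + 0) + K * 0"
      unfolding d_def by (intro tendsto_intros \<epsilon> pk)
    moreover have "gsub q p \<in> gspace \<Omega>" using q p S(2) by (intro gsub_gspace) auto
    ultimately show ?thesis
      using weak by (intro tendsto_le[OF sequentially_bot]) auto
  qed
  then show ?thesis using p ps by (simp add: gconv_normal_def)
qed

section \<open>The graph of the admissible set map\<close>

lemma gph_Gmap_iff [simp]:
  "((a1, a2, a3, a4), u) \<in> gph \<Omega> (Gmap \<Omega> \<alpha> \<beta> Q) \<longleftrightarrow>
    a1 \<in> L2 \<Omega> \<and> a2 \<in> L2 \<Omega> \<and> a3 \<in> L2 \<Omega> \<and> a4 \<in> L2 \<Omega> \<and> u \<in> L2 \<Omega> \<and>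
    (AE x in M \<Omega>. \<alpha> x + a3 x \<le> u x \<and> u x \<le> \<beta> x + a4 x) \<and> u \<in> Q"
  by (auto simp: gph_def Espace_def Gmap_def Uad_def)

lemma gph_Gmap_box:
  "((a1, a2, a3, a4), u) \<in> gph \<Omega> (Gmap \<Omega> \<alpha> \<beta> Q) \<Longrightarrow>
    AE x in M \<Omega>. \<alpha> x + a3 x \<le> u x \<and> u x \<le> \<beta> x + a4 x"
  by simp

lemma gph_Gmap_subset_gspace: "gph \<Omega> (Gmap \<Omega> \<alpha> \<beta> Q) \<subseteq> gspace \<Omega>"
proof
  fix p assume "p \<in> gph \<Omega> (Gmap \<Omega> \<alpha> \<beta> Q)"
  then show "p \<in> gspace \<Omega>" by (cases p rule: gpt_cases) simp
qed

lemma gph_Gmap_convex: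
  assumes "L2_convex Q"
  shows "gconvex (gph \<Omega> (Gmap \<Omega> \<alpha> \<beta> Q))"
  unfolding gconvex_def
proof (intro ballI allI impI)
  fix p q and t :: real
  assume p: "p \<in> gph \<Omega> (Gmap \<Omega> \<alpha> \<beta> Q)" and q: "q \<in> gph \<Omega> (Gmap \<Omega> \<alpha> \<beta> Q)" and t: "0 \<le> t \<and> t \<le> 1"
  obtain a1 a2 a3 a4 u where p_eq: "p = ((a1, a2, a3, a4), u)" by (rule gpt_cases)
  obtain b1 b2 b3 b4 v where q_eq: "q = ((b1, b2, b3, b4), v)" by (rule gpt_cases)
  have L2: "a1 \<in> L2 \<Omega>" "a2 \<in> L2 \<Omega>" "a3 \<in> L2 \<Omega>" "a4 \<in> L2 \<Omega>" "u \<in> L2 \<Omega>"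
      "b1 \<in> L2 \<Omega>" "b2 \<in> L2 \<Omega>" "b3 \<in> L2 \<Omega>" "b4 \<in> L2 \<Omega>" "v \<in> L2 \<Omega>"
    using p q by (simp_all add: p_eq q_eq)
  have box_p: "AE x in M \<Omega>. \<alpha> x + a3 x \<le> u x \<and> u x \<le> \<beta> x + a4 x"
    and box_q: "AE x in M \<Omega>. \<alpha> x + b3 x \<le> v x \<and> v x \<le> \<beta> x + b4 x"
    using p q by (simp_all add: p_eq q_eq)
  have "AE x in M \<Omega>. \<alpha> x + (a3 x + t * (b3 x - a3 x)) \<le> u x + t * (v x - u x)
      \<and> u x + t * (v x - u x) \<le> \<beta> x + (a4 x + t * (b4 x - a4 x))"
    using box_p box_q
  proof eventually_elim
    case (elim x)
    have "t * (\<alpha> x + b3 x - v x) \<le> 0" "(1 - t) * (\<alpha> x + a3 x - u x) \<le> 0"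
      "t * (v x - \<beta> x - b4 x) \<le> 0" "(1 - t) * (u x - \<beta> x - a4 x) \<le> 0"
      using elim t by (simp_all add: mult_nonneg_nonpos)
    then show ?case by (simp add: algebra_simps)
  qed
  moreover have "(\<lambda>x. u x + t * (v x - u x)) \<in> Q"
  proof -
    have "(\<lambda>x. (1 - t) * u x + t * v x) \<in> Q"
      using assms p q t unfolding L2_convex_def by (simp add: p_eq q_eq)
    moreover have "(\<lambda>x. (1 - t) * u x + t * v x) = (\<lambda>x. u x + t * (v x - u x))"
      by (simp add: algebra_simps)
    ultimately show ?thesis by simp
  qed
  ultimately show "gcomb t p q \<in> gph \<Omega> (Gmap \<Omega> \<alpha> \<beta> Q)"
    using L2 by (simp add: p_eq q_eq L2_add L2_cmult L2_diff)
qed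

context
  fixes \<Omega> :: "'a::euclidean_space set" and \<alpha> \<beta> :: "'a \<Rightarrow> real" and Q :: "('a \<Rightarrow> real) set"
    and \<epsilon> :: real and ey eJ ea eb u Y J A B U :: "'a \<Rightarrow> real"
  assumes point: "((ey, eJ, ea, eb), u) \<in> gph \<Omega> (Gmap \<Omega> \<alpha> \<beta> Q)"
    and normal: "\<And>q. q \<in> gph \<Omega> (Gmap \<Omega> \<alpha> \<beta> Q) \<Longrightarrow>
      ginner \<Omega> ((Y, J, A, B), U) (gsub q ((ey, eJ, ea, eb), u))
        \<le> \<epsilon> * gnorm \<Omega> (gsub q ((ey, eJ, ea, eb), u))"
begin

lemma gph_normal_Y_le: "h \<in> L2 \<Omega> \<Longrightarrow> L2_inner \<Omega> Y h \<le> \<epsilon> * L2_norm \<Omega> h"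
  using normal[of "((\<lambda>x. ey x + h x, eJ, ea, eb), u)"] point by (simp add: gnorm_simp L2_add)

lemma gph_normal_J_le: "h \<in> L2 \<Omega> \<Longrightarrow> L2_inner \<Omega> J h \<le> \<epsilon> * L2_norm \<Omega> h"
  using normal[of "((ey, \<lambda>x. eJ x + h x, ea, eb), u)"] point by (simp add: gnorm_simp L2_add)

lemma gph_normal_A_ge:
  assumes "\<phi> \<in> L2 \<Omega>" "AE x in M \<Omega>. 0 \<le> \<phi> x"
  shows "- L2_inner \<Omega> A \<phi> \<le> \<epsilon> * L2_norm \<Omega> \<phi>"
proof -
  have "((ey, eJ, \<lambda>x. ea x - \<phi> x, eb), u) \<in> gph \<Omega> (Gmap \<Omega> \<alpha> \<beta> Q)"
    using point assms by (auto simp: L2_diff elim: AE_mp)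
  from normal[OF this] show ?thesis by (simp add: gnorm_simp)
qed

lemma gph_normal_A_le:
  assumes "m \<in> L2 \<Omega>" "AE x in M \<Omega>. 0 \<le> m x \<and> m x \<le> u x - \<alpha> x - ea x"
  shows "L2_inner \<Omega> A m \<le> \<epsilon> * L2_norm \<Omega> m"
proof -
  have "((ey, eJ, \<lambda>x. ea x + m x, eb), u) \<in> gph \<Omega> (Gmap \<Omega> \<alpha> \<beta> Q)"
    using point assms by (auto simp: L2_add elim: AE_mp)
  from normal[OF this] show ?thesis by (simp add: gnorm_simp)
qed

lemma gph_normal_B_le:
  assumes "\<phi> \<in> L2 \<Omega>" "AE x in M \<Omega>. 0 \<le> \<phi> x"
  shows "L2_inner \<Omega> B \<phi> \<le> \<epsilon> * L2_norm \<Omega> \<phi>"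
proof -
  have "((ey, eJ, ea, \<lambda>x. eb x + \<phi> x), u) \<in> gph \<Omega> (Gmap \<Omega> \<alpha> \<beta> Q)"
    using point assms by (auto simp: L2_add elim: AE_mp)
  from normal[OF this] show ?thesis by (simp add: gnorm_simp)
qed

lemma gph_normal_B_ge:
  assumes "m \<in> L2 \<Omega>" "AE x in M \<Omega>. 0 \<le> m x \<and> m x \<le> \<beta> x + eb x - u x"
  shows "- L2_inner \<Omega> B m \<le> \<epsilon> * L2_norm \<Omega> m"
proof -
  have "((ey, eJ, ea, \<lambda>x. eb x - m x), u) \<in> gph \<Omega> (Gmap \<Omega> \<alpha> \<beta> Q)"
    using point assms by (auto simp: L2_diff elim: AE_mp)
  from normal[OF this] show ?thesis by (simp add: gnorm_simp)
qed

lemma gph_normal_Q_le: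
  assumes "Q \<subseteq> L2 \<Omega>" "q \<in> Q"
  shows "L2_inner \<Omega> A (\<lambda>x. q x - u x) + L2_inner \<Omega> B (\<lambda>x. q x - u x) + L2_inner \<Omega> U (\<lambda>x. q x - u x)
    \<le> sqrt 3 * \<epsilon> * L2_norm \<Omega> (\<lambda>x. q x - u x)"
proof -
  let ?q = "((ey, eJ, \<lambda>x. ea x + (q x - u x), \<lambda>x. eb x + (q x - u x)), q)"
  let ?n = "L2_norm \<Omega> (\<lambda>x. q x - u x)"
  have "?q \<in> gph \<Omega> (Gmap \<Omega> \<alpha> \<beta> Q)"
    using point assms by (auto simp: L2_add L2_diff elim: AE_mp)
  moreover have "gnorm \<Omega> (gsub ?q ((ey, eJ, ea, eb), u)) = sqrt 3 * ?n"
  proof -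
    have "gnorm \<Omega> (gsub ?q ((ey, eJ, ea, eb), u)) = sqrt (3 * ?n\<^sup>2)"
      by (simp add: gnorm_simp)
    then show ?thesis by (simp add: real_sqrt_mult)
  qed
  ultimately show ?thesis
    using normal[of ?q] by (simp add: ac_simps)
qed

lemma gph_normal_Y_zero: "\<epsilon> = 0 \<Longrightarrow> Y \<in> L2 \<Omega> \<Longrightarrow> AE x in M \<Omega>. Y x = 0"
  using L2_norm_le_if_inner_le[of Y \<Omega> 0] gph_normal_Y_le by (intro L2_norm_le_0_imp_AE_zero) auto

lemma gph_normal_J_zero: "\<epsilon> = 0 \<Longrightarrow> J \<in> L2 \<Omega> \<Longrightarrow> AE x in M \<Omega>. J x = 0"
  using L2_norm_le_if_inner_le[of J \<Omega> 0] gph_normal_J_le by (intro L2_norm_le_0_imp_AE_zero) auto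

lemma gph_normal_A_sign:
  assumes "\<epsilon> = 0" "A \<in> L2 \<Omega>" "\<alpha> \<in> borel_measurable (M \<Omega>)"
  shows "AE x in M \<Omega>. 0 \<le> A x \<and> (0 < u x - \<alpha> x - ea x \<longrightarrow> A x = 0)"
proof (rule L2_nonneg_complementary[OF assms(2)])
  have "ea \<in> L2 \<Omega>" "u \<in> L2 \<Omega>" using point by simp_all
  then show "(\<lambda>x. u x - \<alpha> x - ea x) \<in> borel_measurable (M \<Omega>)"
    by (intro borel_measurable_diff assms(3) L2_measurable)
  show "AE x in M \<Omega>. 0 \<le> u x - \<alpha> x - ea x"
    using point by (auto elim: eventually_mono)
qed (use gph_normal_A_ge gph_normal_A_le assms(1) in auto)

lemma gph_normal_B_sign:
  assumes "\<epsilon> = 0" "B \<in> L2 \<Omega>" "\<beta> \<in> borel_measurable (M \<Omega>)"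
  shows "AE x in M \<Omega>. B x \<le> 0 \<and> (0 < \<beta> x + eb x - u x \<longrightarrow> B x = 0)"
proof -
  have "AE x in M \<Omega>. 0 \<le> - B x \<and> (0 < \<beta> x + eb x - u x \<longrightarrow> - B x = 0)"
  proof (rule L2_nonneg_complementary[OF L2_uminus[OF assms(2)]])
    have "eb \<in> L2 \<Omega>" "u \<in> L2 \<Omega>" using point by simp_all
    then show "(\<lambda>x. \<beta> x + eb x - u x) \<in> borel_measurable (M \<Omega>)"
      by (intro borel_measurable_diff borel_measurable_add assms(3) L2_measurable)
    show "AE x in M \<Omega>. 0 \<le> \<beta> x + eb x - u x"
      using point by (auto elim: eventually_mono)
  qed (use gph_normal_B_le gph_normal_B_ge assms(1) in auto)
  then show ?thesis by (auto elim: eventually_mono)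
qed

lemma gph_normal_conv_normal:
  assumes "\<epsilon> = 0" "Q \<subseteq> L2 \<Omega>" and L2: "A \<in> L2 \<Omega>" "B \<in> L2 \<Omega>" "U \<in> L2 \<Omega>"
  shows "(\<lambda>x. A x + B x + U x) \<in> conv_normal \<Omega> u Q"
proof -
  have u: "u \<in> L2 \<Omega>" "u \<in> Q" using point by simp_all
  have "L2_inner \<Omega> (\<lambda>x. A x + B x + U x) (\<lambda>x. q x - u x) \<le> 0" if "q \<in> Q" for q
  proof -
    have "(\<lambda>x. q x - u x) \<in> L2 \<Omega>" using assms(2) that u by (intro L2_diff) auto
    then show ?thesis
      using gph_normal_Q_le[OF assms(2) that] L2 assms(1) by (simp add: L2_inner_add_left L2_add)
  qed
  then show ?thesis using u L2 by (simp add: conv_normal_def L2_add)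
qed

end

lemma gph_normal_sum_bound:
  assumes point: "((ey, eJ, ea, eb), u) \<in> gph \<Omega> (Gmap \<Omega> \<alpha> \<beta> Q)"
    and normal: "\<And>q. q \<in> gph \<Omega> (Gmap \<Omega> \<alpha> \<beta> Q) \<Longrightarrow>
      ginner \<Omega> ((Y, J, A, B), U) (gsub q ((ey, eJ, ea, eb), u))
        \<le> \<epsilon> * gnorm \<Omega> (gsub q ((ey, eJ, ea, eb), u))"
    and L2: "A \<in> L2 \<Omega>" "B \<in> L2 \<Omega>" "U \<in> L2 \<Omega>" and \<epsilon>: "0 \<le> \<epsilon>"
    and Q: "Q \<subseteq> L2 \<Omega>" and C: "\<And>q. q \<in> Q \<Longrightarrow> L2_norm \<Omega> q \<le> C"
    and cL: "c \<in> L2 \<Omega>" and r: "r > 0"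
    and ball: "\<And>v. v \<in> L2 \<Omega> \<Longrightarrow> L2_norm \<Omega> (\<lambda>x. v x - c x) < r \<Longrightarrow> v \<in> Q"
  shows "r / 2 * L2_norm \<Omega> (\<lambda>x. A x + B x + U x)
    \<le> sqrt 3 * \<epsilon> * (2 * C) + L2_inner \<Omega> (\<lambda>x. A x + B x + U x) (\<lambda>x. u x - c x)"
proof (rule L2_normal_interior_bound[OF cL r ball])
  have "u \<in> L2 \<Omega>" "u \<in> Q" using point by simp_all
  then show "u \<in> L2 \<Omega>" by simp
  show "(\<lambda>x. A x + B x + U x) \<in> L2 \<Omega>" using L2 by (intro L2_add)
  fix q assume "q \<in> Q"
  then have qL: "q \<in> L2 \<Omega>" using Q by auto
  have "L2_norm \<Omega> (\<lambda>x. q x - u x) \<le> 2 * C"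
    using L2_norm_diff_le[OF qL \<open>u \<in> L2 \<Omega>\<close>] C[OF \<open>q \<in> Q\<close>] C[OF \<open>u \<in> Q\<close>] by linarith
  then have "sqrt 3 * \<epsilon> * L2_norm \<Omega> (\<lambda>x. q x - u x) \<le> sqrt 3 * \<epsilon> * (2 * C)"
    using \<epsilon> by (intro mult_left_mono) auto
  moreover have "L2_inner \<Omega> (\<lambda>x. A x + B x + U x) (\<lambda>x. q x - u x)
      = L2_inner \<Omega> A (\<lambda>x. q x - u x) + L2_inner \<Omega> B (\<lambda>x. q x - u x) + L2_inner \<Omega> U (\<lambda>x. q x - u x)"
    using L2 qL \<open>u \<in> L2 \<Omega>\<close> by (simp add: L2_inner_add_left L2_add L2_diff)
  ultimately show "L2_inner \<Omega> (\<lambda>x. A x + B x + U x) (\<lambda>x. q x - u x) \<le> sqrt 3 * \<epsilon> * (2 * C)"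
    using gph_normal_Q_le[OF point normal Q \<open>q \<in> Q\<close>] by linarith
qed

definition Gmap_coderiv :: "'a::euclidean_space set \<Rightarrow> ('a \<Rightarrow> real) \<Rightarrow> ('a \<Rightarrow> real) \<Rightarrow> ('a \<Rightarrow> real) set
    \<Rightarrow> 'a pert \<Rightarrow> ('a \<Rightarrow> real) \<Rightarrow> ('a \<Rightarrow> real) \<Rightarrow> 'a pert set" where
  "Gmap_coderiv \<Omega> \<alpha> \<beta> Q e u us =
    {(esy, esJ, esa, esb). (esy, esJ, esa, esb) \<in> Espace \<Omega>
      \<and> (AE x in M \<Omega>. esy x = 0) \<and> (AE x in M \<Omega>. esJ x = 0)
      \<and> (\<exists>u1 u2. u1 \<in> L2 \<Omega> \<and> u2 \<in> conv_normal \<Omega> u Q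
            \<and> (AE x in M \<Omega>. us x = u1 x - u2 x)
            \<and> (AE x in M \<Omega>. u1 x = esa x + esb x))
      \<and> (AE x in M \<Omega>. x \<in> Omega1 \<Omega> \<alpha> e u \<longrightarrow> esa x \<ge> 0)
      \<and> (AE x in M \<Omega>. x \<notin> Omega1 \<Omega> \<alpha> e u \<longrightarrow> esa x = 0)
      \<and> (AE x in M \<Omega>. x \<in> Omega3 \<Omega> \<beta> e u \<longrightarrow> esb x \<le> 0)
      \<and> (AE x in M \<Omega>. x \<notin> Omega3 \<Omega> \<beta> e u \<longrightarrow> esb x = 0)}"

lemma gph_Gmap_complementarity:
  assumes p: "((ey, eJ, ea, eb), u) \<in> gph \<Omega> (Gmap \<Omega> \<alpha> \<beta> Q)"
    and q: "((a1, a2, a3, a4), v) \<in> gph \<Omega> (Gmap \<Omega> \<alpha> \<beta> Q)"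
    and signs: "AE x in M \<Omega>. (u x = \<alpha> x + ea x \<longrightarrow> 0 \<le> A x) \<and> (u x \<noteq> \<alpha> x + ea x \<longrightarrow> A x = 0)
      \<and> (u x = \<beta> x + eb x \<longrightarrow> B x \<le> 0) \<and> (u x \<noteq> \<beta> x + eb x \<longrightarrow> B x = 0)"
  shows "L2_inner \<Omega> A (\<lambda>x. (a3 x - ea x) - (v x - u x))
    + L2_inner \<Omega> B (\<lambda>x. (a4 x - eb x) - (v x - u x)) \<le> 0"
proof -
  have "AE x in M \<Omega>. A x * ((a3 x - ea x) - (v x - u x)) \<le> 0
      \<and> B x * ((a4 x - eb x) - (v x - u x)) \<le> 0"
    using signs gph_Gmap_box[OF p] gph_Gmap_box[OF q]
  proof eventually_elim
    case (elim x)
    have "A x * ((a3 x - ea x) - (v x - u x)) \<le> 0"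
    proof (cases "u x = \<alpha> x + ea x")
      case True
      then have "0 \<le> A x" "(a3 x - ea x) - (v x - u x) \<le> 0" using elim by auto
      then show ?thesis by (rule mult_nonneg_nonpos)
    qed (use elim in simp)
    moreover have "B x * ((a4 x - eb x) - (v x - u x)) \<le> 0"
    proof (cases "u x = \<beta> x + eb x")
      case True
      then have "B x \<le> 0" "0 \<le> (a4 x - eb x) - (v x - u x)" using elim by auto
      then show ?thesis by (rule mult_nonpos_nonneg)
    qed (use elim in simp)
    ultimately show ?case ..
  qed
  then have "L2_inner \<Omega> A (\<lambda>x. (a3 x - ea x) - (v x - u x)) \<le> 0"
    "L2_inner \<Omega> B (\<lambda>x. (a4 x - eb x) - (v x - u x)) \<le> 0"
    by (auto intro: L2_inner_nonpos_AE elim: eventually_mono)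
  then show ?thesis by simp
qed

lemma Gmap_coderivD:
  assumes es: "(Y, J, A, B) \<in> Gmap_coderiv \<Omega> \<alpha> \<beta> Q (ey, eJ, ea, eb) u us"
  shows "Y \<in> L2 \<Omega>" "J \<in> L2 \<Omega>" "A \<in> L2 \<Omega>" "B \<in> L2 \<Omega>"
    and "AE x in M \<Omega>. Y x = 0" "AE x in M \<Omega>. J x = 0"
    and "\<exists>u2 \<in> conv_normal \<Omega> u Q. AE x in M \<Omega>. - us x = u2 x - (A x + B x)"
    and "AE x in M \<Omega>. (u x = \<alpha> x + ea x \<longrightarrow> 0 \<le> A x) \<and> (u x \<noteq> \<alpha> x + ea x \<longrightarrow> A x = 0)
      \<and> (u x = \<beta> x + eb x \<longrightarrow> B x \<le> 0) \<and> (u x \<noteq> \<beta> x + eb x \<longrightarrow> B x = 0)"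
proof -
  show "Y \<in> L2 \<Omega>" "J \<in> L2 \<Omega>" "A \<in> L2 \<Omega>" "B \<in> L2 \<Omega>"
    and "AE x in M \<Omega>. Y x = 0" "AE x in M \<Omega>. J x = 0"
    using es by (simp_all add: Gmap_coderiv_def Espace_def)
  obtain u1 u2 where "u2 \<in> conv_normal \<Omega> u Q" and u12: "AE x in M \<Omega>. us x = u1 x - u2 x"
    and u1: "AE x in M \<Omega>. u1 x = A x + B x"
    using es by (auto simp: Gmap_coderiv_def)
  moreover have "AE x in M \<Omega>. - us x = u2 x - (A x + B x)"
    using u12 u1 by eventually_elim simp
  ultimately show "\<exists>u2 \<in> conv_normal \<Omega> u Q. AE x in M \<Omega>. - us x = u2 x - (A x + B x)"
    by blast
  have "AE x in M \<Omega>. x \<in> Omega1 \<Omega> \<alpha> (ey, eJ, ea, eb) u \<longrightarrow> A x \<ge> 0"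
    "AE x in M \<Omega>. x \<notin> Omega1 \<Omega> \<alpha> (ey, eJ, ea, eb) u \<longrightarrow> A x = 0"
    "AE x in M \<Omega>. x \<in> Omega3 \<Omega> \<beta> (ey, eJ, ea, eb) u \<longrightarrow> B x \<le> 0"
    "AE x in M \<Omega>. x \<notin> Omega3 \<Omega> \<beta> (ey, eJ, ea, eb) u \<longrightarrow> B x = 0"
    using es by (simp_all add: Gmap_coderiv_def)
  then show "AE x in M \<Omega>. (u x = \<alpha> x + ea x \<longrightarrow> 0 \<le> A x) \<and> (u x \<noteq> \<alpha> x + ea x \<longrightarrow> A x = 0)
      \<and> (u x = \<beta> x + eb x \<longrightarrow> B x \<le> 0) \<and> (u x \<noteq> \<beta> x + eb x \<longrightarrow> B x = 0)"
    using AE_in_domain[of \<Omega>] by eventually_elim (simp add: Omega1_def Omega3_def)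
qed

lemma Gmap_coderiv_imp_gconv_normal:
  assumes p: "((ey, eJ, ea, eb), u) \<in> gph \<Omega> (Gmap \<Omega> \<alpha> \<beta> Q)" and us: "us \<in> L2 \<Omega>"
    and es: "(Y, J, A, B) \<in> Gmap_coderiv \<Omega> \<alpha> \<beta> Q (ey, eJ, ea, eb) u us"
  shows "((Y, J, A, B), \<lambda>x. - us x) \<in> gconv_normal \<Omega> (gph \<Omega> (Gmap \<Omega> \<alpha> \<beta> Q)) ((ey, eJ, ea, eb), u)"
proof -
  obtain u2 where u2: "u2 \<in> conv_normal \<Omega> u Q" and us_eq: "AE x in M \<Omega>. - us x = u2 x - (A x + B x)"
    using Gmap_coderivD(7)[OF es] by blast
  have L2: "Y \<in> L2 \<Omega>" "J \<in> L2 \<Omega>" "A \<in> L2 \<Omega>" "B \<in> L2 \<Omega>" "u2 \<in> L2 \<Omega>"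
    using Gmap_coderivD(1-4)[OF es] u2 by (auto simp: conv_normal_def split: if_splits)
  note Y0 = Gmap_coderivD(5)[OF es] and J0 = Gmap_coderivD(6)[OF es]
    and signs = Gmap_coderivD(8)[OF es]
  have "ginner \<Omega> ((Y, J, A, B), \<lambda>x. - us x) (gsub q ((ey, eJ, ea, eb), u)) \<le> 0"
    if q: "q \<in> gph \<Omega> (Gmap \<Omega> \<alpha> \<beta> Q)" for q
  proof -
    obtain a1 a2 a3 a4 v where q_eq: "q = ((a1, a2, a3, a4), v)" by (rule gpt_cases)
    have qL: "a1 \<in> L2 \<Omega>" "a2 \<in> L2 \<Omega>" "a3 \<in> L2 \<Omega>" "a4 \<in> L2 \<Omega>" "v \<in> L2 \<Omega>"
      and pL: "ey \<in> L2 \<Omega>" "eJ \<in> L2 \<Omega>" "ea \<in> L2 \<Omega>" "eb \<in> L2 \<Omega>" "u \<in> L2 \<Omega>"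
      using p q by (simp_all add: q_eq)
    let ?h = "\<lambda>x. v x - u x"
    have "L2_inner \<Omega> Y (\<lambda>x. a1 x - ey x) = L2_inner \<Omega> (\<lambda>x. 0) (\<lambda>x. a1 x - ey x)"
      "L2_inner \<Omega> J (\<lambda>x. a2 x - eJ x) = L2_inner \<Omega> (\<lambda>x. 0) (\<lambda>x. a2 x - eJ x)"
      "L2_inner \<Omega> (\<lambda>x. - us x) ?h = L2_inner \<Omega> (\<lambda>x. u2 x - (A x + B x)) ?h"
      using Y0 J0 us_eq L2 qL pL us
      by (intro L2_inner_cong_AE; auto simp: L2_diff L2_add L2_uminus elim: eventually_mono)+
    then have "ginner \<Omega> ((Y, J, A, B), \<lambda>x. - us x) (gsub q ((ey, eJ, ea, eb), u))
        = L2_inner \<Omega> A (\<lambda>x. (a3 x - ea x) - ?h x) + L2_inner \<Omega> B (\<lambda>x. (a4 x - eb x) - ?h x)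
          + L2_inner \<Omega> u2 ?h"
      using L2 qL pL
      by (simp add: q_eq L2_inner_diff_right L2_inner_diff_left L2_inner_add_left L2_diff L2_add)
    also have "\<dots> \<le> 0"
    proof -
      have "L2_inner \<Omega> u2 ?h \<le> 0"
        using u2 q by (auto simp: conv_normal_def q_eq split: if_splits)
      then show ?thesis
        using gph_Gmap_complementarity[OF p q[unfolded q_eq] signs] by linarith
    qed
    finally show ?thesis .
  qed
  moreover have "((Y, J, A, B), \<lambda>x. - us x) \<in> gspace \<Omega>"
    using L2 us by (simp add: L2_uminus)
  ultimately show ?thesis
    using p by (simp add: gconv_normal_def)
qed

lemma gconv_normal_imp_Gmap_coderiv:
  assumes p: "((ey, eJ, ea, eb), u) \<in> gph \<Omega> (Gmap \<Omega> \<alpha> \<beta> Q)"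
    and \<alpha>: "\<alpha> \<in> borel_measurable (M \<Omega>)" and \<beta>: "\<beta> \<in> borel_measurable (M \<Omega>)" and Q: "Q \<subseteq> L2 \<Omega>"
    and ps: "((Y, J, A, B), \<lambda>x. - us x)
      \<in> gconv_normal \<Omega> (gph \<Omega> (Gmap \<Omega> \<alpha> \<beta> Q)) ((ey, eJ, ea, eb), u)"
  shows "(Y, J, A, B) \<in> Gmap_coderiv \<Omega> \<alpha> \<beta> Q (ey, eJ, ea, eb) u us"
proof -
  have L2: "Y \<in> L2 \<Omega>" "J \<in> L2 \<Omega>" "A \<in> L2 \<Omega>" "B \<in> L2 \<Omega>" "(\<lambda>x. - us x) \<in> L2 \<Omega>"
    using ps p by (simp_all add: gconv_normal_def)
  have normal: "\<And>q. q \<in> gph \<Omega> (Gmap \<Omega> \<alpha> \<beta> Q) \<Longrightarrow>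
      ginner \<Omega> ((Y, J, A, B), \<lambda>x. - us x) (gsub q ((ey, eJ, ea, eb), u))
        \<le> 0 * gnorm \<Omega> (gsub q ((ey, eJ, ea, eb), u))"
    using ps p by (simp add: gconv_normal_def)
  have Y0: "AE x in M \<Omega>. Y x = 0"
    by (rule gph_normal_Y_zero[OF p _ refl L2(1)]) (rule normal)
  have J0: "AE x in M \<Omega>. J x = 0"
    by (rule gph_normal_J_zero[OF p _ refl L2(2)]) (rule normal)
  have A_sign: "AE x in M \<Omega>. 0 \<le> A x \<and> (0 < u x - \<alpha> x - ea x \<longrightarrow> A x = 0)"
    by (rule gph_normal_A_sign[OF p _ refl L2(3) \<alpha>]) (rule normal)
  have B_sign: "AE x in M \<Omega>. B x \<le> 0 \<and> (0 < \<beta> x + eb x - u x \<longrightarrow> B x = 0)"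
    by (rule gph_normal_B_sign[OF p _ refl L2(4) \<beta>]) (rule normal)
  have "AE x in M \<Omega>. (x \<in> Omega1 \<Omega> \<alpha> (ey, eJ, ea, eb) u \<longrightarrow> A x \<ge> 0)
      \<and> (x \<notin> Omega1 \<Omega> \<alpha> (ey, eJ, ea, eb) u \<longrightarrow> A x = 0)
      \<and> (x \<in> Omega3 \<Omega> \<beta> (ey, eJ, ea, eb) u \<longrightarrow> B x \<le> 0)
      \<and> (x \<notin> Omega3 \<Omega> \<beta> (ey, eJ, ea, eb) u \<longrightarrow> B x = 0)"
    using A_sign B_sign gph_Gmap_box[OF p] AE_in_domain[of \<Omega>]
    by eventually_elim (auto simp: Omega1_def Omega3_def)
  moreover have "(\<lambda>x. A x + B x + - us x) \<in> conv_normal \<Omega> u Q"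
    by (rule gph_normal_conv_normal[OF p _ refl Q L2(3-5)]) (rule normal)
  then have "\<exists>u1 u2. u1 \<in> L2 \<Omega> \<and> u2 \<in> conv_normal \<Omega> u Q
      \<and> (AE x in M \<Omega>. us x = u1 x - u2 x) \<and> (AE x in M \<Omega>. u1 x = A x + B x)"
    using L2 by (intro exI[of _ "\<lambda>x. A x + B x"] exI[of _ "\<lambda>x. A x + B x + - us x"])
      (simp add: L2_add)
  ultimately show ?thesis
    using L2 Y0 J0 by (auto simp: Gmap_coderiv_def Espace_def elim: AE_mp)
qed

context
  fixes \<Omega> :: "'a::euclidean_space set" and \<alpha> \<beta> :: "'a \<Rightarrow> real" and Q :: "('a \<Rightarrow> real) set"
    and \<epsilon> :: "nat \<Rightarrow> real" and E :: real and ey eJ ea eb u Y J A B U :: "nat \<Rightarrow> 'a \<Rightarrow> real"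
  assumes point: "\<And>k. ((ey k, eJ k, ea k, eb k), u k) \<in> gph \<Omega> (Gmap \<Omega> \<alpha> \<beta> Q)"
    and normal: "\<And>k q. q \<in> gph \<Omega> (Gmap \<Omega> \<alpha> \<beta> Q) \<Longrightarrow>
      ginner \<Omega> ((Y k, J k, A k, B k), U k) (gsub q ((ey k, eJ k, ea k, eb k), u k))
        \<le> \<epsilon> k * gnorm \<Omega> (gsub q ((ey k, eJ k, ea k, eb k), u k))"
    and gspace: "\<And>k. ((Y k, J k, A k, B k), U k) \<in> gspace \<Omega>"
    and \<epsilon>: "\<And>k. 0 \<le> \<epsilon> k" "\<And>k. \<epsilon> k \<le> E"
    and weak: "\<And>v. v \<in> gspace \<Omega> \<Longrightarrow> convergent (\<lambda>k. ginner \<Omega> ((Y k, J k, A k, B k), U k) v)"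
begin

lemma gph_normals_Y_bounded: "L2_norm \<Omega> (Y k) \<le> E"
  using L2_norm_le_if_inner_le[OF _ \<epsilon>(1) gph_normal_Y_le[OF point[of k] normal[where k = k]]]
    gspace[of k] \<epsilon>(2)[of k]
  by (meson gspace_simp order_trans)

lemma gph_normals_J_bounded: "L2_norm \<Omega> (J k) \<le> E"
  using L2_norm_le_if_inner_le[OF _ \<epsilon>(1) gph_normal_J_le[OF point[of k] normal[where k = k]]]
    gspace[of k] \<epsilon>(2)[of k]
  by (meson gspace_simp order_trans)

lemma gph_normals_A_bounded: "\<exists>K. \<forall>k. L2_norm \<Omega> (A k) \<le> K"
proof (rule L2_norm_uniformly_bounded)
  show "A k \<in> L2 \<Omega>" for k using gspace[of k] by simp
  show "\<exists>K. \<forall>k. L2_inner \<Omega> (A k) v \<le> K" if "v \<in> L2 \<Omega>" for v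
    using convergent_bounded_above[OF weak[of "((\<lambda>x. 0, \<lambda>x. 0, v, \<lambda>x. 0), \<lambda>x. 0)"]] that by simp
  show "- L2_inner \<Omega> (A k) \<phi> \<le> E * L2_norm \<Omega> \<phi>" if "\<phi> \<in> L2 \<Omega>" "AE x in M \<Omega>. 0 \<le> \<phi> x" for k \<phi>
    using gph_normal_A_ge[OF point[of k] normal[where k = k] that]
      mult_right_mono[OF \<epsilon>(2)[of k] L2_norm_nonneg[of \<Omega> \<phi>]]
    by linarith
qed

lemma gph_normals_B_bounded: "\<exists>K. \<forall>k. L2_norm \<Omega> (B k) \<le> K"
proof -
  have "\<exists>K. \<forall>k. L2_norm \<Omega> (\<lambda>x. - B k x) \<le> K"
  proof (rule L2_norm_uniformly_bounded)
    show "(\<lambda>x. - B k x) \<in> L2 \<Omega>" for k using gspace[of k] by (simp add: L2_uminus)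
    show "\<exists>K. \<forall>k. L2_inner \<Omega> (\<lambda>x. - B k x) v \<le> K" if "v \<in> L2 \<Omega>" for v
      using convergent_bounded_above weak[of "((\<lambda>x. 0, \<lambda>x. 0, \<lambda>x. 0, v), \<lambda>x. 0)"] that
      by (simp add: convergent_minus_iff[symmetric])
    show "- L2_inner \<Omega> (\<lambda>x. - B k x) \<phi> \<le> E * L2_norm \<Omega> \<phi>"
      if "\<phi> \<in> L2 \<Omega>" "AE x in M \<Omega>. 0 \<le> \<phi> x" for k \<phi>
      using gph_normal_B_le[OF point[of k] normal[where k = k] that]
        mult_right_mono[OF \<epsilon>(2)[of k] L2_norm_nonneg[of \<Omega> \<phi>]]
      by simp
  qed
  then show ?thesis by simp
qed

lemma gph_normals_sum_weakly_bounded: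
  assumes v: "v \<in> L2 \<Omega>"
  shows "\<exists>K. \<forall>k. L2_inner \<Omega> (\<lambda>x. A k x + B k x + U k x) v \<le> K"
proof -
  have "L2_inner \<Omega> (\<lambda>x. A k x + B k x + U k x) v
      = ginner \<Omega> ((Y k, J k, A k, B k), U k) ((\<lambda>x. 0, \<lambda>x. 0, v, v), v)" for k
    using gspace[of k] v by (simp add: L2_inner_add_left L2_add)
  then show ?thesis
    using convergent_bounded_above[OF weak[of "((\<lambda>x. 0, \<lambda>x. 0, v, v), v)"]] v by auto
qed

lemma gph_normals_sum_bounded:
  assumes Q: "Q \<subseteq> L2 \<Omega>" "L2_bounded \<Omega> Q" and c: "c \<in> L2_interior \<Omega> Q"
    and u0: "u0 \<in> L2 \<Omega>" and u_lim: "(\<lambda>k. L2_norm \<Omega> (\<lambda>x. u k x - u0 x)) \<longlonglongrightarrow> 0"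
  shows "\<exists>K. eventually (\<lambda>k. L2_norm \<Omega> (\<lambda>x. A k x + B k x + U k x) \<le> K) sequentially"
proof -
  define w where "w k = (\<lambda>x. A k x + B k x + U k x)" for k
  obtain C where C: "\<And>q. q \<in> Q \<Longrightarrow> L2_norm \<Omega> q \<le> C"
    using Q(2) by (auto simp: L2_bounded_def)
  then have "0 \<le> C" using point[of 0] L2_norm_nonneg[of \<Omega> "u 0"] by (meson gph_Gmap_iff order_trans)
  obtain r where cL: "c \<in> L2 \<Omega>" and r: "r > 0"
    and ball: "\<And>v. v \<in> L2 \<Omega> \<Longrightarrow> L2_norm \<Omega> (\<lambda>x. v x - c x) < r \<Longrightarrow> v \<in> Q"
    using c by (auto simp: L2_interior_def)
  have L2: "A k \<in> L2 \<Omega>" "B k \<in> L2 \<Omega>" "U k \<in> L2 \<Omega>" "u k \<in> L2 \<Omega>" for k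
    using gspace[of k] point[of k] by simp_all
  have wL: "w k \<in> L2 \<Omega>" for k unfolding w_def using L2 by (intro L2_add)
  have dL: "(\<lambda>x. u0 x - c x) \<in> L2 \<Omega>" using u0 cL by (rule L2_diff)
  obtain K1 where K1: "\<And>k. L2_inner \<Omega> (w k) (\<lambda>x. u0 x - c x) \<le> K1"
    using gph_normals_sum_weakly_bounded[OF dL] unfolding w_def by blast
  have "eventually (\<lambda>k. L2_norm \<Omega> (\<lambda>x. u k x - u0 x) < r / 4) sequentially"
    using order_tendstoD(2)[OF u_lim, of "r / 4"] r by simp
  then have "eventually (\<lambda>k. L2_norm \<Omega> (w k) \<le> 4 * (sqrt 3 * E * (2 * C) + K1) / r) sequentially"
  proof eventually_elim
    case (elim k)
    have "r / 2 * L2_norm \<Omega> (w k) \<le> sqrt 3 * \<epsilon> k * (2 * C) + L2_inner \<Omega> (w k) (\<lambda>x. u k x - c x)"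
      unfolding w_def
      by (rule gph_normal_sum_bound[OF point normal[where k = k] L2(1-3) \<epsilon>(1) Q(1) C cL r ball])
    also have "sqrt 3 * \<epsilon> k * (2 * C) \<le> sqrt 3 * E * (2 * C)"
      using \<epsilon>(2)[of k] \<open>0 \<le> C\<close> by (intro mult_right_mono mult_left_mono) auto
    also have "L2_inner \<Omega> (w k) (\<lambda>x. u k x - c x)
        = L2_inner \<Omega> (w k) (\<lambda>x. u k x - u0 x) + L2_inner \<Omega> (w k) (\<lambda>x. u0 x - c x)"
      using L2_inner_add_right[OF wL L2_diff[OF L2(4) u0] dL, of k k] by simp
    also have "L2_inner \<Omega> (w k) (\<lambda>x. u k x - u0 x) \<le> L2_norm \<Omega> (w k) * (r / 4)"
      using L2_Cauchy_Schwarz[OF wL L2_diff[OF L2(4) u0], of k k] elim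
        mult_left_mono[OF less_imp_le[OF elim] L2_norm_nonneg[of \<Omega> "w k"]] by linarith
    finally show ?case
      using K1[of k] r by (simp add: field_simps)
  qed
  then show ?thesis unfolding w_def by blast
qed

lemma gph_normals_bounded:
  assumes Q: "Q \<subseteq> L2 \<Omega>" "L2_bounded \<Omega> Q" and c: "c \<in> L2_interior \<Omega> Q"
    and u0: "u0 \<in> L2 \<Omega>" and u_lim: "(\<lambda>k. L2_norm \<Omega> (\<lambda>x. u k x - u0 x)) \<longlonglongrightarrow> 0"
  shows "\<exists>K. eventually (\<lambda>k. gnorm \<Omega> ((Y k, J k, A k, B k), U k) \<le> K) sequentially"
proof -
  obtain KA where KA: "\<And>k. L2_norm \<Omega> (A k) \<le> KA" using gph_normals_A_bounded by blast
  obtain KB where KB: "\<And>k. L2_norm \<Omega> (B k) \<le> KB" using gph_normals_B_bounded by blast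
  obtain KW where KW: "eventually (\<lambda>k. L2_norm \<Omega> (\<lambda>x. A k x + B k x + U k x) \<le> KW) sequentially"
    using gph_normals_sum_bounded[OF Q c u0 u_lim] by blast
  have "eventually (\<lambda>k. gnorm \<Omega> ((Y k, J k, A k, B k), U k)
      \<le> E + E + KA + KB + (KW + KA + KB)) sequentially"
    using KW
  proof eventually_elim
    case (elim k)
    have L2: "A k \<in> L2 \<Omega>" "B k \<in> L2 \<Omega>" "U k \<in> L2 \<Omega>" using gspace[of k] by simp_all
    have "U k = (\<lambda>x. (A k x + B k x + U k x) - A k x - B k x)" by simp
    then have "L2_norm \<Omega> (U k)
        \<le> L2_norm \<Omega> (\<lambda>x. A k x + B k x + U k x) + L2_norm \<Omega> (A k) + L2_norm \<Omega> (B k)"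
      using L2_norm_diff_le[OF L2_diff[OF L2_add[OF L2_add[OF L2(1,2)] L2(3)] L2(1)] L2(2)]
        L2_norm_diff_le[OF L2_add[OF L2_add[OF L2(1,2)] L2(3)] L2(1)] by simp
    then show ?case
      using gnorm_le_sum[of \<Omega> "Y k" "J k" "A k" "B k" "U k"] gph_normals_Y_bounded[of k]
        gph_normals_J_bounded[of k] KA[of k] KB[of k] elim by linarith
  qed
  then show ?thesis by blast
qed

end

lemma limiting_normal_gph_Gmap:
  assumes Q: "Q \<subseteq> L2 \<Omega>" "L2_convex Q" "L2_bounded \<Omega> Q" and c: "c \<in> L2_interior \<Omega> Q"
  shows "limiting_normal \<Omega> (gph \<Omega> (Gmap \<Omega> \<alpha> \<beta> Q)) p \<subseteq> gconv_normal \<Omega> (gph \<Omega> (Gmap \<Omega> \<alpha> \<beta> Q)) p"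
proof
  let ?S = "gph \<Omega> (Gmap \<Omega> \<alpha> \<beta> Q)"
  fix ps assume ps: "ps \<in> limiting_normal \<Omega> ?S p"
  then have p: "p \<in> ?S" and "ps \<in> gspace \<Omega>"
    by (simp_all add: limiting_normal_def split: if_splits)
  obtain \<epsilon> pk psk where approx: "\<And>k. \<epsilon> k \<ge> 0 \<and> pk k \<in> ?S \<and> psk k \<in> eps_normal \<Omega> (\<epsilon> k) ?S (pk k)"
    and \<epsilon>: "\<epsilon> \<longlonglongrightarrow> 0" and pk: "(\<lambda>k. gnorm \<Omega> (gsub (pk k) p)) \<longlonglongrightarrow> 0"
    and weak: "\<And>v. v \<in> gspace \<Omega> \<Longrightarrow> (\<lambda>k. ginner \<Omega> (psk k) v) \<longlonglongrightarrow> ginner \<Omega> ps v"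
    using ps unfolding limiting_normal_def if_P[OF p] by blast
  obtain ey eJ ea eb u where pk_eq: "\<And>k. pk k = ((ey k, eJ k, ea k, eb k), u k)"
    by (rule gpt_seq_cases[of pk]) auto
  obtain Y J A B U where psk_eq: "\<And>k. psk k = ((Y k, J k, A k, B k), U k)"
    by (rule gpt_seq_cases[of psk]) auto
  obtain ey0 eJ0 ea0 eb0 u0 where p_eq: "p = ((ey0, eJ0, ea0, eb0), u0)"
    by (rule gpt_cases)
  obtain E where E: "\<And>k. \<epsilon> k \<le> E"
    using convergent_bounded_above[OF convergentI[OF \<epsilon>]] by blast
  have "\<exists>K. eventually (\<lambda>k. gnorm \<Omega> (psk k) \<le> K) sequentially"
    unfolding psk_eq
  proof (rule gph_normals_bounded)
    show "((ey k, eJ k, ea k, eb k), u k) \<in> ?S" for k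
      using approx[of k] by (simp add: pk_eq)
    show "ginner \<Omega> ((Y k, J k, A k, B k), U k) (gsub q ((ey k, eJ k, ea k, eb k), u k))
        \<le> \<epsilon> k * gnorm \<Omega> (gsub q ((ey k, eJ k, ea k, eb k), u k))" if "q \<in> ?S" for k q
      using eps_normal_convex_le[OF gph_Gmap_convex[OF Q(2)] _ that] approx[of k]
      by (simp add: pk_eq psk_eq)
    show "((Y k, J k, A k, B k), U k) \<in> gspace \<Omega>" for k
      using approx[of k] by (simp add: eps_normal_def psk_eq split: if_splits)
    show "convergent (\<lambda>k. ginner \<Omega> ((Y k, J k, A k, B k), U k) v)" if "v \<in> gspace \<Omega>" for v
      using weak[OF that] by (auto simp: psk_eq convergent_def)
    show "u0 \<in> L2 \<Omega>" using p by (simp add: p_eq)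
    show "(\<lambda>k. L2_norm \<Omega> (\<lambda>x. u k x - u0 x)) \<longlonglongrightarrow> 0"
    proof (rule tendsto_sandwich[OF _ _ tendsto_const pk])
      show "\<forall>\<^sub>F k in sequentially. L2_norm \<Omega> (\<lambda>x. u k x - u0 x) \<le> gnorm \<Omega> (gsub (pk k) p)"
        by (simp add: pk_eq p_eq L2_norm_le_gnorm)
    qed (simp add: L2_norm_nonneg)
  qed (use approx E Q c in auto)
  then obtain K where "eventually (\<lambda>k. gnorm \<Omega> (psk k) \<le> K) sequentially" by blast
  with gph_Gmap_convex[OF Q(2)] gph_Gmap_subset_gspace p \<open>ps \<in> gspace \<Omega>\<close> approx \<epsilon> pk weak
  show "ps \<in> gconv_normal \<Omega> ?S p"
    by (intro limiting_normal_convex) auto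
qed

theorem proposition3p5:
  fixes \<Omega> :: "'a::euclidean_space set"
    and \<alpha> \<beta> \<zeta> :: "'a \<Rightarrow> real"
    and a :: "'a \<Rightarrow> 'a \<Rightarrow> 'a \<Rightarrow> real"
    and f L :: "'a \<Rightarrow> real \<Rightarrow> real"
    and Q :: "('a \<Rightarrow> real) set"
    and pbar :: real
    and ebar :: "'a pert"
    and ubar us :: "'a \<Rightarrow> real"
  assumes dim: "DIM('a) \<in> {1, 2, 3}"
    and \<alpha>: "\<alpha> \<in> Linf \<Omega>" and \<beta>: "\<beta> \<in> Linf \<Omega>"
    and \<alpha>\<beta>: "AE x in M \<Omega>. \<alpha> x \<le> \<beta> x" and \<alpha>\<beta>_ne: "\<not> (AE x in M \<Omega>. \<alpha> x = \<beta> x)"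
    and \<zeta>: "\<zeta> \<in> L2 \<Omega>" "AE x in M \<Omega>. \<zeta> x \<ge> 0"
    \<comment> \<open>Caratheodory, C^2 in y\<close>
    and f_meas: "\<forall>y. (\<lambda>x. f x y) \<in> borel_measurable (M \<Omega>)"
    and L_meas: "\<forall>y. (\<lambda>x. L x y) \<in> borel_measurable (M \<Omega>)"
    and f_C2: "AE x in M \<Omega>. (\<forall>y. (f x has_real_derivative deriv (f x) y) (at y)
                  \<and> (deriv (f x) has_real_derivative deriv (deriv (f x)) y) (at y))
                  \<and> continuous_on UNIV (deriv (deriv (f x)))"
    and L_C2: "AE x in M \<Omega>. (\<forall>y. (L x has_real_derivative deriv (L x) y) (at y)
                  \<and> (deriv (L x) has_real_derivative deriv (deriv (L x)) y) (at y))
                  \<and> continuous_on UNIV (deriv (deriv (L x)))"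
    \<comment> \<open>(A1)\<close>
    and pbar: "pbar > real DIM('a) / 2"
    and A1_0: "(\<lambda>x. f x 0) \<in> Lp pbar \<Omega>"
    and A1_mono: "AE x in M \<Omega>. \<forall>y. deriv (f x) y \<ge> 0"
    and A1_bd: "\<forall>Mb. \<exists>C. AE x in M \<Omega>. \<forall>y. \<bar>y\<bar> \<le> Mb \<longrightarrow>
                  \<bar>deriv (f x) y\<bar> + \<bar>deriv (deriv (f x)) y\<bar> \<le> C"
    and A1_uc: "\<forall>Mb. \<forall>\<epsilon>>0. \<exists>\<delta>>0. AE x in M \<Omega>. \<forall>y1 y2. \<bar>y1\<bar> \<le> Mb \<longrightarrow> \<bar>y2\<bar> \<le> Mb \<longrightarrow>
                  \<bar>y1 - y2\<bar> < \<delta> \<longrightarrow> \<bar>deriv (deriv (f x)) y1 - deriv (deriv (f x)) y2\<bar> < \<epsilon>"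
    \<comment> \<open>(A2)\<close>
    and A2_0: "integrable (M \<Omega>) (\<lambda>x. L x 0)"
    and A2_bd1: "\<forall>Mb. \<exists>\<psi> \<in> Lp pbar \<Omega>. AE x in M \<Omega>. \<forall>y. \<bar>y\<bar> \<le> Mb \<longrightarrow> \<bar>deriv (L x) y\<bar> \<le> \<psi> x"
    and A2_bd2: "\<forall>Mb. \<exists>C. AE x in M \<Omega>. \<forall>y. \<bar>y\<bar> \<le> Mb \<longrightarrow> \<bar>deriv (deriv (L x)) y\<bar> \<le> C"
    and A2_uc: "\<forall>Mb. \<forall>\<epsilon>>0. \<exists>\<delta>>0. AE x in M \<Omega>. \<forall>y1 y2. \<bar>y1\<bar> \<le> Mb \<longrightarrow> \<bar>y2\<bar> \<le> Mb \<longrightarrow>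
                  \<bar>y1 - y2\<bar> < \<delta> \<longrightarrow> \<bar>deriv (deriv (L x)) y1 - deriv (deriv (L x)) y2\<bar> < \<epsilon>"
    \<comment> \<open>(A3)\<close>
    and \<Omega>: "open \<Omega>" "bounded \<Omega>" "lipschitz_boundary \<Omega>"
    and Q: "Q \<subseteq> L2 \<Omega>" "L2_closed \<Omega> Q" "L2_convex Q" "L2_bounded \<Omega> Q"
    and CQ: "\<exists>e \<in> Espace \<Omega>. Uad \<Omega> \<alpha> \<beta> e \<inter> L2_interior \<Omega> Q \<noteq> {}"
    and a_cont: "\<forall>i\<in>Basis. \<forall>j\<in>Basis. continuous_on (closure \<Omega>) (a i j)"
    and a_ell: "\<exists>\<Lambda>>0. \<forall>x\<in>closure \<Omega>. \<forall>\<xi>.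
                  (\<Sum>i\<in>Basis. \<Sum>j\<in>Basis. a i j x * (\<xi> \<bullet> i) * (\<xi> \<bullet> j)) \<ge> \<Lambda> * (norm \<xi>)\<^sup>2"
    \<comment> \<open>the point\<close>
    and ebar: "ebar \<in> Espace \<Omega>"
    and ubar: "ubar \<in> Sol \<Omega> a f L \<zeta> \<alpha> \<beta> Q ebar"
    and us: "us \<in> L2 \<Omega>"
  shows "limiting_coderiv \<Omega> (Gmap \<Omega> \<alpha> \<beta> Q) ebar ubar us
           = regular_coderiv \<Omega> (Gmap \<Omega> \<alpha> \<beta> Q) ebar ubar us
       \<and> regular_coderiv \<Omega> (Gmap \<Omega> \<alpha> \<beta> Q) ebar ubar us
           = {(esy, esJ, esa, esb). (esy, esJ, esa, esb) \<in> Espace \<Omega>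
                \<and> (AE x in M \<Omega>. esy x = 0) \<and> (AE x in M \<Omega>. esJ x = 0)
                \<and> (\<exists>u1 u2. u1 \<in> L2 \<Omega> \<and> u2 \<in> conv_normal \<Omega> ubar Q
                      \<and> (AE x in M \<Omega>. us x = u1 x - u2 x)
                      \<and> (AE x in M \<Omega>. u1 x = esa x + esb x))
                \<and> (AE x in M \<Omega>. x \<in> Omega1 \<Omega> \<alpha> ebar ubar \<longrightarrow> esa x \<ge> 0)
                \<and> (AE x in M \<Omega>. x \<notin> Omega1 \<Omega> \<alpha> ebar ubar \<longrightarrow> esa x = 0)
                \<and> (AE x in M \<Omega>. x \<in> Omega3 \<Omega> \<beta> ebar ubar \<longrightarrow> esb x \<le> 0)
                \<and> (AE x in M \<Omega>. x \<notin> Omega3 \<Omega> \<beta> ebar ubar \<longrightarrow> esb x = 0)}"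
proof -
  \<comment> \<open>Only \<open>ubar \<in> Gmap \<Omega> \<alpha> \<beta> Q ebar\<close>, the measurability of \<open>\<alpha>, \<beta>\<close> and the convexity,
    boundedness and interior point of \<open>Q\<close> are used: the formula holds at every point of the graph.\<close>
  let ?S = "gph \<Omega> (Gmap \<Omega> \<alpha> \<beta> Q)"
  obtain ey eJ ea eb where e: "ebar = (ey, eJ, ea, eb)" by (cases ebar) auto
  have p: "((ey, eJ, ea, eb), ubar) \<in> ?S"
    using ebar ubar e by (simp add: Sol_def gph_def)
  obtain c where c: "c \<in> L2_interior \<Omega> Q" using CQ by blast
  have \<alpha>\<beta>_meas: "\<alpha> \<in> borel_measurable (M \<Omega>)" "\<beta> \<in> borel_measurable (M \<Omega>)"
    using \<alpha> \<beta> by (simp_all add: Linf_def)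
  have normal_iff: "(es, \<lambda>x. - us x) \<in> gconv_normal \<Omega> ?S (ebar, ubar)
      \<longleftrightarrow> es \<in> Gmap_coderiv \<Omega> \<alpha> \<beta> Q ebar ubar us" for es
    using Gmap_coderiv_imp_gconv_normal[OF p us] gconv_normal_imp_Gmap_coderiv[OF p \<alpha>\<beta>_meas Q(1)]
    by (cases es) (auto simp: e)
  have "limiting_coderiv \<Omega> (Gmap \<Omega> \<alpha> \<beta> Q) ebar ubar us \<subseteq> Gmap_coderiv \<Omega> \<alpha> \<beta> Q ebar ubar us"
    using limiting_normal_gph_Gmap[OF Q(1,3,4) c] normal_iff unfolding limiting_coderiv_def by blast
  moreover have "Gmap_coderiv \<Omega> \<alpha> \<beta> Q ebar ubar us \<subseteq> regular_coderiv \<Omega> (Gmap \<Omega> \<alpha> \<beta> Q) ebar ubar us"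
    using gconv_normal_subset_frechet_normal normal_iff unfolding regular_coderiv_def by blast
  moreover have "regular_coderiv \<Omega> (Gmap \<Omega> \<alpha> \<beta> Q) ebar ubar us
      \<subseteq> limiting_coderiv \<Omega> (Gmap \<Omega> \<alpha> \<beta> Q) ebar ubar us"
    using frechet_normal_subset_limiting_normal
    unfolding regular_coderiv_def limiting_coderiv_def by blast
  ultimately show ?thesis
    unfolding Gmap_coderiv_def by blast
qed

end
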